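(* Under the setting described in the context (conditions (V), (S), (C), compactly supported initial measure $\mu_0$, lattice approximate solution $\mu^N_t$ on $[0,T]$), there is a constant $C_d$, independent of $N$ and of $t\in[0,T]$, such that for all $s,t\in[0,T]$ $$\|\mu^N_t-\mu^N_s\|_{BL^*}\le C_d|t-s|,$$ and moreover, for all $t\in[0,T]$ and all $l$, $$\|V[\mu^N_t]\|_{BL^*}=\|\mu^N_t\|_{BL^*}\le C_d,\qquad \sum_{i=1}^I\sum_{j=1}^J m^v_{ij}(V[\mu^N_{t_l}])\,(1+|v_j|+|v_j|^2)\le C_d.$$
   Context: $\mathcal{M}^+(\mathbb{R}^k)$: finite nonnegative Borel measures; $\|f\|_{BL}=\max(\sup|f|,\operatorname{Lip}f)$, $\|\mu\|_{BL^*}=\sup\{\int\psi\,d\mu:\|\psi\|_{BL}\le1\}$. Conditions: (V) $V:\mathcal{M}^+(\mathbb{R}^d)\to\mathcal{M}^+(\mathbb{R}^d\times\mathbb{R}^d)$, $\pi_1^{\#}V[\mu]=\mu$; (V1) $\sup_{(x,v)\in\operatorname{supp}V[\mu]}|v|\le C_S(1+\sup_{(x,v)\in\operatorname{supp}V[\mu]}|x|)$; (V2) for each $R'>0$, $\|V[\mu]-V[\nu]\|_{BL^*}\le C_F(R')\|\mu-\nu\|_{BL^*}$ for $\mu,\nu$ supported in $B(0,R')$. (S) $s:\mathcal{M}^+(\mathbb{R}^d)\to\mathcal{M}^+(\mathbb{R}^d)$, (S1) $\|s[\mu]-s[\nu]\|_{BL^*}\le L\|\mu-\nu\|_{BL^*}$,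 (S2) $\operatorname{supp}s[\mu]\subseteq B(0,R)$ for all $\mu$. (C) $c:\mathbb{R}^d\times\mathcal{M}^+(\mathbb{R}^d)\to\mathbb{R}$, (C1) $|c|\le C_b$, (C2) $|c(x,\mu)-c(y,\nu)|\le C_L(|x-y|+\|\mu-\nu\|_{BL^*})$. Lattice scheme: fix $T>0$; $\Delta_N=1/N$; $x_1,\dots,x_I$ enumerate $(N^{-2}\mathbb{Z}^d)\cap[-N,N]^d$, $v_1,\dots,v_J$ enumerate $(N^{-1}\mathbb{Z}^d)\cap[-N,N]^d$; $Q_i=x_i+[0,\Delta_N^2)^d$, $Q'_j=v_j+[0,\Delta_N)^d$; $m_i^x(\mu)=\mu(Q_i)$, $m_{ij}^v(W)=W(Q_i\times Q'_j)$. Time points $t_l=l/N$, $l=0,\dots,M$, with the intervals $[t_l,t_{l+1})$ ($l<M$) and $[t_M,T]$ covering $[0,T]$, each of length at most $\Delta_N$. Set $\mu^N_0=\sum_i m_i^x(\mu_0)\delta_{x_i}$ and for $\tau\in[0,\Delta_N]$: $\mu^N_{t_l+\tau}=\tau\sum_i m_i^x(s[\mu^N_{t_l}])\delta_{x_i}+\sum_{i,j}m_{ij}^v(V[\mu^N_{t_l}])e^{c(x_i,\mu^N_{t_l})\tau}\delta_{x_i+\tau v_j}$. *)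

theory Defs
  imports "HOL-Analysis.Analysis"
begin

definition fbm :: "'a::topological_space measure \<Rightarrow> bool" where
  "fbm \<mu> \<longleftrightarrow> sets \<mu> = sets borel \<and> finite_measure \<mu>"

definition msupp :: "'a::metric_space measure \<Rightarrow> 'a set" where
  "msupp \<mu> = {x. \<forall>e>0. emeasure \<mu> (ball x e) \<noteq> 0}"

definition BL1 :: "('a::metric_space \<Rightarrow> real) set" where
  "BL1 = {\<psi>. (\<forall>x. \<bar>\<psi> x\<bar> \<le> 1) \<and> 1-lipschitz_on UNIV \<psi>}"

definition bl_dist :: "'a::metric_space measure \<Rightarrow> 'a measure \<Rightarrow> real" where
  "bl_dist \<mu> \<nu> = (SUP \<psi>\<in>BL1. integral\<^sup>L \<mu> \<psi> - integral\<^sup>L \<nu> \<psi>)"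

definition bl_norm :: "'a::metric_space measure \<Rightarrow> real" where
  "bl_norm \<mu> = (SUP \<psi>\<in>BL1. integral\<^sup>L \<mu> \<psi>)"

definition lat_x :: "nat \<Rightarrow> 'a::euclidean_space set" where
  "lat_x N = {x. \<forall>b\<in>Basis. (\<exists>k::int. x \<bullet> b = real_of_int k / (real N)^2) \<and> \<bar>x \<bullet> b\<bar> \<le> real N}"

definition lat_v :: "nat \<Rightarrow> 'a::euclidean_space set" where
  "lat_v N = {v. \<forall>b\<in>Basis. (\<exists>k::int. v \<bullet> b = real_of_int k / real N) \<and> \<bar>v \<bullet> b\<bar> \<le> real N}"

definition cellQ :: "nat \<Rightarrow> 'a::euclidean_space \<Rightarrow> 'a set" where
  "cellQ N x = {y. \<forall>b\<in>Basis. x \<bullet> b \<le> y \<bullet> b \<and> y \<bullet> b < x \<bullet> b + 1 / (real N)^2}"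

definition cellQ' :: "nat \<Rightarrow> 'a::euclidean_space \<Rightarrow> 'a set" where
  "cellQ' N v = {w. \<forall>b\<in>Basis. v \<bullet> b \<le> w \<bullet> b \<and> w \<bullet> b < v \<bullet> b + 1 / real N}"

definition mx :: "nat \<Rightarrow> 'a::euclidean_space measure \<Rightarrow> 'a \<Rightarrow> real" where
  "mx N \<mu> x = measure \<mu> (cellQ N x)"

definition mv :: "nat \<Rightarrow> ('a::euclidean_space \<times> 'a) measure \<Rightarrow> 'a \<Rightarrow> 'a \<Rightarrow> real" where
  "mv N W x v = measure W (cellQ N x \<times> cellQ' N v)"

definition lat_init :: "nat \<Rightarrow> 'a::euclidean_space measure \<Rightarrow> 'a measure" where
  "lat_init N \<mu>0 = measure_of UNIV (sets borel)
     (\<lambda>A. \<Sum>x\<in>lat_x N. ennreal (mx N \<mu>0 x) * indicator A x)"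

text \<open>One step: mu^N_{t_l + tau} as a function of mu = mu^N_{t_l} and tau.\<close>
definition lat_step :: "nat \<Rightarrow> ('a::euclidean_space measure \<Rightarrow> 'a measure)
    \<Rightarrow> ('a measure \<Rightarrow> ('a \<times> 'a) measure) \<Rightarrow> ('a \<Rightarrow> 'a measure \<Rightarrow> real)
    \<Rightarrow> 'a measure \<Rightarrow> real \<Rightarrow> 'a measure" where
  "lat_step N s V c \<mu> \<tau> = measure_of UNIV (sets borel)
     (\<lambda>A. (\<Sum>x\<in>lat_x N. ennreal (\<tau> * mx N (s \<mu>) x) * indicator A x)
        + (\<Sum>(x,v)\<in>lat_x N \<times> lat_v N.
             ennreal (mv N (V \<mu>) x v * exp (c x \<mu> * \<tau>)) * indicator A (x + \<tau> *\<^sub>R v)))"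

primrec lat_grid :: "nat \<Rightarrow> ('a::euclidean_space measure \<Rightarrow> 'a measure)
    \<Rightarrow> ('a measure \<Rightarrow> ('a \<times> 'a) measure) \<Rightarrow> ('a \<Rightarrow> 'a measure \<Rightarrow> real)
    \<Rightarrow> 'a measure \<Rightarrow> nat \<Rightarrow> 'a measure" where
  "lat_grid N s V c \<mu>0 0 = lat_init N \<mu>0"
| "lat_grid N s V c \<mu>0 (Suc l) = lat_step N s V c (lat_grid N s V c \<mu>0 l) (1 / real N)"

text \<open>mu^N_t: for t in (t_l, t_{l+1}] use the step from t_l with tau = t - t_l.\<close>
definition lat_sol :: "nat \<Rightarrow> ('a::euclidean_space measure \<Rightarrow> 'a measure)
    \<Rightarrow> ('a measure \<Rightarrow> ('a \<times> 'a) measure) \<Rightarrow> ('a \<Rightarrow> 'a measure \<Rightarrow> real)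
    \<Rightarrow> 'a measure \<Rightarrow> real \<Rightarrow> 'a measure" where
  "lat_sol N s V c \<mu>0 t =
     (if t \<le> 0 then lat_init N \<mu>0
      else (let l = nat (\<lceil>t * real N\<rceil> - 1)
            in lat_step N s V c (lat_grid N s V c \<mu>0 l) (t - real l / real N)))"

end

theory Submission
  imports Defs
begin

(* Every mu^N_t is a finite sum of point masses, so it is controlled by its total mass and
   the radius of its support.  One step of length 1/N multiplies the mass by at most
   exp ((L + C_b) / N), up to the source term, and the radius by at most 1 + (C_S + d) / N,
   since (V1) bounds the velocities charged by V[mu] by C_S (1 + radius); both bounds are
   therefore exponential in t and independent of N.  Once N exceeds them, all atoms stay on
   the x-lattice inside [-N,N]^d and all charged velocities lie in the v-cells, so no mass
   is lost at the lattice boundary and a step with tau = 0 reproduces mu^N_{t_l}.  On each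
   [t_l, t_{l+1}] the integral of a test function is Lipschitz in tau, because the weights
   exp (c tau) and the positions x + tau v move at bounded speed; these pieces glue to the
   Lipschitz bound on [0, T].  The norm identity is conservation of mass under the first
   marginal, and the velocity moments are bounded by the mass times the speed bound. *)

section \<open>Finite point measures and supports\<close>

definition discrete_measure :: "'k set \<Rightarrow> ('k \<Rightarrow> real) \<Rightarrow> ('k \<Rightarrow> 'b::metric_space) \<Rightarrow> 'b measure" where
  "discrete_measure K w p =
     measure_of UNIV (sets borel) (\<lambda>A. \<Sum>k\<in>K. ennreal (w k) * indicator A (p k))"

lemma sets_discrete_measure [simp]: "sets (discrete_measure K w p) = sets borel"
  unfolding discrete_measure_def by (metis sets.sets_measure_of_eq space_borel)

lemma space_discrete_measure [simp]: "space (discrete_measure K w p) = UNIV"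
  unfolding discrete_measure_def by simp

lemma emeasure_discrete_measure:
  assumes "finite K" "A \<in> sets borel"
  shows "emeasure (discrete_measure K w p) A = (\<Sum>k\<in>K. ennreal (w k) * indicator A (p k))"
  unfolding discrete_measure_def
proof (rule emeasure_measure_of_sigma)
  show "sigma_algebra UNIV (sets borel)"
    by (metis sets.sigma_algebra_axioms space_borel)
  show "countably_additive (sets borel) (\<lambda>A. \<Sum>k\<in>K. ennreal (w k) * indicator A (p k))"
  proof (rule countably_additiveI)
    fix F :: "nat \<Rightarrow> 'b set" assume "disjoint_family F"
    have "(\<Sum>i. \<Sum>k\<in>K. ennreal (w k) * indicator (F i) (p k)) =
          (\<Sum>k\<in>K. \<Sum>i. ennreal (w k) * indicator (F i) (p k))"
      by (rule suminf_sum) auto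
    also have "\<dots> = (\<Sum>k\<in>K. ennreal (w k) * indicator (\<Union>i. F i) (p k))"
      using suminf_indicator[OF \<open>disjoint_family F\<close>] by simp
    finally show "(\<Sum>i. \<Sum>k\<in>K. ennreal (w k) * indicator (F i) (p k)) =
          (\<Sum>k\<in>K. ennreal (w k) * indicator (\<Union>i. F i) (p k))" .
  qed
qed (use assms in \<open>auto simp: positive_def\<close>)

lemma fbm_discrete_measure: "finite K \<Longrightarrow> fbm (discrete_measure K w p)"
  unfolding fbm_def
  by (auto intro!: finite_measureI simp: emeasure_discrete_measure ennreal_mult_eq_top_iff)

lemma AE_discrete_measure:
  assumes "finite K"
  shows "AE x in discrete_measure K w p. x \<in> p ` {k\<in>K. 0 < w k}"
proof (rule AE_I')
  let ?Z = "UNIV - p ` {k\<in>K. 0 < w k}"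
  have "open ?Z"
    using assms by (intro open_Diff finite_imp_closed) auto
  moreover have "emeasure (discrete_measure K w p) ?Z = 0"
    using assms \<open>open ?Z\<close> by (auto simp: emeasure_discrete_measure ennreal_eq_0_iff intro!: sum.neutral)
  ultimately show "?Z \<in> null_sets (discrete_measure K w p)"
    by (auto simp: null_sets_def)
qed auto

lemma measure_discrete_measure:
  assumes "finite K" "\<And>k. k \<in> K \<Longrightarrow> 0 \<le> w k" "A \<in> sets borel"
  shows "measure (discrete_measure K w p) A = (\<Sum>k\<in>K. w k * indicator A (p k))"
proof -
  have "emeasure (discrete_measure K w p) A = (\<Sum>k\<in>K. ennreal (w k * indicator A (p k)))"
    using assms by (simp add: emeasure_discrete_measure ennreal_mult' ennreal_indicator)
  also have "\<dots> = ennreal (\<Sum>k\<in>K. w k * indicator A (p k))"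
    using assms by (intro sum_ennreal) auto
  finally have "emeasure (discrete_measure K w p) A = ennreal (\<Sum>k\<in>K. w k * indicator A (p k))" .
  moreover have "0 \<le> (\<Sum>k\<in>K. w k * indicator A (p k))"
    using assms by (intro sum_nonneg) auto
  ultimately show ?thesis
    by (simp only: measure_def enn2real_ennreal)
qed

lemma integral_concentrated_on_finite:
  fixes M :: "'b::metric_space measure"
  assumes "finite_measure M" "sets M = sets borel" "finite A" "AE x in M. x \<in> A"
    and f: "f \<in> borel_measurable borel"
  shows "integral\<^sup>L M f = (\<Sum>y\<in>A. measure M {y} * f y)"
proof -
  interpret finite_measure M by fact
  have singleton: "{y} \<in> sets M" for y
    using assms(2) by simp
  have "integral\<^sup>L M f = integral\<^sup>L M (\<lambda>x. \<Sum>y\<in>A. f y * indicator {y} x)"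
  proof (rule integral_cong_AE)
    show "f \<in> borel_measurable M"
      using f unfolding measurable_cong_sets[OF assms(2) refl] .
    show "(\<lambda>x. \<Sum>y\<in>A. f y * indicator {y} x) \<in> borel_measurable M"
      using singleton by measurable
    show "AE x in M. f x = (\<Sum>y\<in>A. f y * indicator {y} x)"
      using assms(4) by eventually_elim (use assms(3) in \<open>simp add: indicator_def\<close>)
  qed
  also have "\<dots> = (\<Sum>y\<in>A. measure M {y} * f y)"
    using singleton
    by (subst Bochner_Integration.integral_sum)
      (auto simp: mult.commute less_top[symmetric] intro!: integrable_mult_right integrable_real_indicator)
  finally show ?thesis .
qed

lemma measure_concentrated_on_finite:
  fixes M :: "'b::metric_space measure"
  assumes "finite_measure M" "sets M = sets borel" "finite A" "AE x in M. x \<in> A" "B \<in> sets borel"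
  shows "measure M B = (\<Sum>y\<in>A. measure M {y} * indicator B y)"
proof -
  interpret finite_measure M by fact
  have "measure M B = integral\<^sup>L M (indicator B)"
    using assms(2,5) by simp
  also have "\<dots> = (\<Sum>y\<in>A. measure M {y} * indicator B y)"
    using assms by (intro integral_concentrated_on_finite) auto
  finally show ?thesis .
qed

lemma integral_discrete_measure:
  assumes K: "finite K" and w: "\<And>k. k \<in> K \<Longrightarrow> 0 \<le> w k" and f: "f \<in> borel_measurable borel"
  shows "integral\<^sup>L (discrete_measure K w p) f = (\<Sum>k\<in>K. w k * f (p k))"
proof -
  let ?M = "discrete_measure K w p"
  have "AE x in ?M. x \<in> p ` K"
    using AE_discrete_measure[OF K] by eventually_elim auto
  then have "integral\<^sup>L ?M f = (\<Sum>y\<in>p ` K. measure ?M {y} * f y)"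
    using K fbm_discrete_measure[OF K] f
    by (intro integral_concentrated_on_finite) (auto simp: fbm_def)
  also have "\<dots> = (\<Sum>y\<in>p ` K. \<Sum>k\<in>K. if p k = y then w k * f y else 0)"
    using K w
    by (intro sum.cong refl)
      (auto simp: measure_discrete_measure sum_distrib_right sum.inter_filter intro!: sum.cong)
  also have "\<dots> = (\<Sum>k\<in>K. \<Sum>y\<in>p ` K. if p k = y then w k * f y else 0)"
    by (rule sum.swap)
  also have "\<dots> = (\<Sum>k\<in>K. w k * f (p k))"
    using K by simp
  finally show ?thesis .
qed

lemma space_eq_UNIV_if_sets_borel: "sets M = sets borel \<Longrightarrow> space M = UNIV"
  by (metis sets_eq_imp_space_eq space_borel)

lemma emeasure_disjoint_msupp:
  fixes M :: "'b::{metric_space,second_countable_topology} measure"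
  assumes M: "sets M = sets borel" and A: "A \<in> sets borel" and disj: "A \<inter> msupp M = {}"
  shows "emeasure M A = 0"
proof -
  define F where "F = {ball x e |x e. 0 < e \<and> emeasure M (ball x e) = 0}"
  have "\<And>S. S \<in> F \<Longrightarrow> open S"
    unfolding F_def by auto
  then obtain F' where F': "F' \<subseteq> F" "countable F'" "\<Union>F' = \<Union>F"
    by (rule Lindelof)
  have null: "(\<Union>S\<in>F'. S) \<in> null_sets M"
  proof (rule null_sets_UN'[OF F'(2)])
    fix S assume "S \<in> F'"
    then obtain x e where "S = ball x e" "emeasure M (ball x e) = 0"
      using F'(1) unfolding F_def by blast
    then show "S \<in> null_sets M"
      using M by (simp add: null_sets_def)
  qed
  have "A \<subseteq> \<Union>F"
  proof
    fix x assume "x \<in> A"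
    then obtain e where "0 < e" "emeasure M (ball x e) = 0"
      using disj unfolding msupp_def by auto
    then show "x \<in> \<Union>F"
      unfolding F_def by force
  qed
  then have "A \<subseteq> (\<Union>S\<in>F'. S)"
    using F'(3) by simp
  then have "A \<in> null_sets M"
    using A M by (intro null_sets_subset[OF null]) auto
  then show ?thesis by auto
qed

lemma exists_msupp_if_measure_nonzero:
  fixes M :: "'b::{metric_space,second_countable_topology} measure"
  assumes "sets M = sets borel" "A \<in> sets borel" "measure M A \<noteq> 0"
  shows "\<exists>y\<in>A. y \<in> msupp M"
proof (rule ccontr)
  assume "\<not> (\<exists>y\<in>A. y \<in> msupp M)"
  then have "emeasure M A = 0"
    by (intro emeasure_disjoint_msupp[OF assms(1,2)]) auto
  with assms(3) show False
    by (simp add: measure_def)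
qed

lemma msupp_subset_closed:
  assumes M: "sets M = sets borel" and A: "closed A" and AE: "AE x in M. x \<in> A"
  shows "msupp M \<subseteq> A"
proof
  fix x assume x: "x \<in> msupp M"
  have "- A \<in> sets M"
    unfolding M using A by (intro borel_open open_Compl)
  moreover have "space M = UNIV"
    using M by (rule space_eq_UNIV_if_sets_borel)
  ultimately have null: "emeasure M (- A) = 0"
    using AE_iff_measurable[of "- A" M "\<lambda>x. x \<in> A"] AE by auto
  show "x \<in> A"
  proof (rule ccontr)
    assume "x \<notin> A"
    then obtain e where "0 < e" "ball x e \<subseteq> - A"
      using A open_contains_ball_eq[of "- A" x] by auto
    then have "emeasure M (ball x e) = 0"
      using emeasure_eq_0[OF \<open>- A \<in> sets M\<close> null] by blast
    with x \<open>0 < e\<close> show False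
      unfolding msupp_def by auto
  qed
qed

lemma emeasure_marginal:
  fixes W :: "('b::metric_space \<times> 'c::metric_space) measure"
  assumes W: "sets W = sets borel" and marg: "distr W borel fst = \<mu>" and A: "A \<in> sets borel"
  shows "emeasure \<mu> A = emeasure W (A \<times> UNIV)"
proof -
  have "fst \<in> measurable W borel"
    unfolding measurable_cong_sets[OF W refl]
    by (intro borel_measurable_continuous_onI continuous_intros)
  moreover have "space W = UNIV"
    using W by (rule space_eq_UNIV_if_sets_borel)
  ultimately show ?thesis
    using emeasure_distr[of fst W borel A] A marg by (simp add: vimage_fst)
qed

lemma msupp_marginal:
  fixes W :: "('b::metric_space \<times> 'c::metric_space) measure"
  assumes W: "sets W = sets borel" and marg: "distr W borel fst = \<mu>" and q: "q \<in> msupp W"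
  shows "fst q \<in> msupp \<mu>"
  unfolding msupp_def
proof (intro CollectI allI impI)
  fix e :: real assume "0 < e"
  have "ball q e \<subseteq> ball (fst q) e \<times> UNIV"
    by (auto simp: subset_eq mem_ball) (metis dist_fst_le le_less_trans fst_conv)
  then have "emeasure W (ball q e) \<le> emeasure W (ball (fst q) e \<times> UNIV)"
    using W by (intro emeasure_mono) (auto intro!: borel_open open_Times)
  also have "\<dots> = emeasure \<mu> (ball (fst q) e)"
    using emeasure_marginal[OF W marg borel_open[OF open_ball]] by simp
  finally have le: "emeasure W (ball q e) \<le> emeasure \<mu> (ball (fst q) e)" .
  have "emeasure W (ball q e) \<noteq> 0"
    using q \<open>0 < e\<close> unfolding msupp_def by auto
  then show "emeasure \<mu> (ball (fst q) e) \<noteq> 0"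
    using le by (intro notI) simp
qed

section \<open>The bounded-Lipschitz norm\<close>

lemma BL1_abs_le: "\<psi> \<in> BL1 \<Longrightarrow> \<bar>\<psi> x\<bar> \<le> 1"
  unfolding BL1_def by auto

lemma BL1_lipschitz: "\<psi> \<in> BL1 \<Longrightarrow> \<bar>\<psi> x - \<psi> y\<bar> \<le> dist x y"
  unfolding BL1_def using lipschitz_onD[of 1 UNIV \<psi> x y] by (auto simp: dist_real_def)

lemma BL1_borel_measurable: "\<psi> \<in> BL1 \<Longrightarrow> \<psi> \<in> borel_measurable borel"
  unfolding BL1_def by (auto intro!: borel_measurable_continuous_onI lipschitz_on_continuous_on)

lemma BL1_const: "\<bar>a\<bar> \<le> 1 \<Longrightarrow> (\<lambda>_. a) \<in> BL1"
  unfolding BL1_def by (auto intro!: lipschitz_onI)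

lemma space_fbm: "fbm M \<Longrightarrow> space M = UNIV"
  unfolding fbm_def using space_eq_UNIV_if_sets_borel by blast

lemma fbm_null_measure: "fbm (null_measure borel)"
  unfolding fbm_def by (auto intro!: finite_measureI)

lemma abs_integral_BL1_le:
  assumes M: "fbm M" and \<psi>: "\<psi> \<in> BL1"
  shows "\<bar>integral\<^sup>L M \<psi>\<bar> \<le> measure M UNIV"
proof -
  interpret finite_measure M
    using M unfolding fbm_def by auto
  have sM: "sets M = sets borel"
    using M unfolding fbm_def by simp
  have "\<psi> \<in> borel_measurable M"
    unfolding measurable_cong_sets[OF sM refl] by (rule BL1_borel_measurable[OF \<psi>])
  then have "integrable M \<psi>"
    using BL1_abs_le[OF \<psi>] by (intro integrable_const_bound[where B=1]) auto
  then have "\<bar>integral\<^sup>L M \<psi>\<bar> \<le> integral\<^sup>L M (\<lambda>_. 1)"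
    using BL1_abs_le[OF \<psi>] by (intro order_trans[OF integral_abs_bound] integral_mono) simp_all
  then show ?thesis
    using space_fbm[OF M] by simp
qed

lemma bl_norm_fbm: "fbm M \<Longrightarrow> bl_norm M = measure M UNIV"
  unfolding bl_norm_def
proof (rule cSup_eq_maximum)
  assume "fbm M"
  show "measure M UNIV \<in> (\<lambda>\<psi>. integral\<^sup>L M \<psi>) ` BL1"
    using BL1_const[of 1] space_fbm[OF \<open>fbm M\<close>] by (auto intro!: image_eqI[where x="\<lambda>_. 1"])
  show "x \<le> measure M UNIV" if "x \<in> (\<lambda>\<psi>. integral\<^sup>L M \<psi>) ` BL1" for x
    using that abs_integral_BL1_le[OF \<open>fbm M\<close>] by force
qed

lemma bl_dist_leI:
  "(\<And>\<psi>. \<psi> \<in> BL1 \<Longrightarrow> integral\<^sup>L M \<psi> - integral\<^sup>L N \<psi> \<le> K) \<Longrightarrow> bl_dist M N \<le> K"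
  unfolding bl_dist_def using BL1_const[of 0] by (intro cSUP_least) auto

lemma integral_diff_le_bl_dist:
  assumes "fbm M" "fbm N" "\<psi> \<in> BL1"
  shows "integral\<^sup>L M \<psi> - integral\<^sup>L N \<psi> \<le> bl_dist M N"
  unfolding bl_dist_def
proof (rule cSUP_upper[OF assms(3)])
  show "bdd_above ((\<lambda>\<psi>. integral\<^sup>L M \<psi> - integral\<^sup>L N \<psi>) ` BL1)"
    using abs_integral_BL1_le[OF assms(1)] abs_integral_BL1_le[OF assms(2)]
    by (intro bdd_aboveI[where M="measure M UNIV + measure N UNIV"]) force
qed

lemma bl_dist_nonneg: "fbm M \<Longrightarrow> fbm N \<Longrightarrow> 0 \<le> bl_dist M N"
  using integral_diff_le_bl_dist[OF _ _ BL1_const[of 0]] by simp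

lemma mass_diff_le_bl_dist:
  assumes "fbm M" "fbm N"
  shows "measure M UNIV - measure N UNIV \<le> bl_dist M N"
  using integral_diff_le_bl_dist[OF assms BL1_const[of 1]] space_fbm[OF assms(1)] space_fbm[OF assms(2)]
  by simp

lemma bl_dist_null_measure_le: "fbm M \<Longrightarrow> bl_dist M (null_measure borel) \<le> measure M UNIV"
  using abs_integral_BL1_le by (intro bl_dist_leI) force

section \<open>Lattice points and cells\<close>

definition lattice_points :: "real \<Rightarrow> 'a::euclidean_space set" where
  "lattice_points h = {x. \<forall>b\<in>Basis. \<exists>k::int. x \<bullet> b = of_int k / h}"

definition hcube :: "real \<Rightarrow> 'a::euclidean_space \<Rightarrow> 'a set" where
  "hcube h x = {y. \<forall>b\<in>Basis. x \<bullet> b \<le> y \<bullet> b \<and> y \<bullet> b < x \<bullet> b + 1 / h}"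

lemma cellQ_eq_hcube: "cellQ N x = hcube ((real N)\<^sup>2) x"
  unfolding cellQ_def hcube_def ..

lemma cellQ'_eq_hcube: "cellQ' N v = hcube (real N) v"
  unfolding cellQ'_def hcube_def ..

lemma lat_x_eq: "lat_x N = {x \<in> lattice_points ((real N)\<^sup>2). \<forall>b\<in>Basis. \<bar>x \<bullet> b\<bar> \<le> real N}"
  unfolding lat_x_def lattice_points_def by auto

lemma lat_v_eq: "lat_v N = {v \<in> lattice_points (real N). \<forall>b\<in>Basis. \<bar>v \<bullet> b\<bar> \<le> real N}"
  unfolding lat_v_def lattice_points_def by auto

lemma hcube_borel [measurable]: "hcube h x \<in> sets borel"
proof -
  have eq: "hcube h x = (\<Inter>b\<in>Basis. {y. x \<bullet> b \<le> y \<bullet> b} \<inter> {y. y \<bullet> b < x \<bullet> b + 1 / h})"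
    unfolding hcube_def by auto
  show ?thesis
    unfolding eq by (intro sets.finite_INT) (auto intro!: borel_closed borel_open
        closed_halfspace_component_ge open_halfspace_component_lt sets.Int)
qed

lemma mem_hcube_self: "0 < h \<Longrightarrow> x \<in> hcube h x"
  unfolding hcube_def by simp

lemma norm_diff_le_hcube:
  fixes x y :: "'a::euclidean_space"
  assumes "y \<in> hcube h x"
  shows "norm (y - x) \<le> real DIM('a) / h"
proof -
  have "norm (y - x) \<le> (\<Sum>b\<in>Basis. \<bar>(y - x) \<bullet> b\<bar>)"
    by (rule norm_le_l1)
  also have "\<dots> \<le> (\<Sum>b\<in>(Basis::'a set). 1 / h)"
  proof (rule sum_mono)
    fix b :: 'a assume "b \<in> Basis"
    then have "x \<bullet> b \<le> y \<bullet> b" "y \<bullet> b < x \<bullet> b + 1 / h"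
      using assms unfolding hcube_def by auto
    then show "\<bar>(y - x) \<bullet> b\<bar> \<le> 1 / h"
      by (simp add: inner_diff_left)
  qed
  finally show ?thesis
    by simp
qed

lemma hcube_disjoint:
  assumes h: "0 < h" and x: "x \<in> lattice_points h" and y: "y \<in> lattice_points h" and "x \<noteq> y"
  shows "hcube h x \<inter> hcube h y = {}"
proof (rule ccontr)
  assume "hcube h x \<inter> hcube h y \<noteq> {}"
  then obtain z where z: "z \<in> hcube h x" "z \<in> hcube h y"
    by auto
  have "x \<bullet> b = y \<bullet> b" if b: "b \<in> Basis" for b
  proof -
    obtain k l :: int where kl: "x \<bullet> b = of_int k / h" "y \<bullet> b = of_int l / h"
      using x y b unfolding lattice_points_def by blast
    have "x \<bullet> b \<le> z \<bullet> b" "z \<bullet> b < x \<bullet> b + 1 / h" "y \<bullet> b \<le> z \<bullet> b" "z \<bullet> b < y \<bullet> b + 1 / h"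
      using z b unfolding hcube_def by auto
    then have "\<bar>of_int k / h - of_int l / h\<bar> < 1 / h"
      unfolding kl abs_less_iff by linarith
    then have "\<bar>of_int (k - l)\<bar> < (1::real)"
      using h by (simp add: diff_divide_distrib[symmetric] abs_divide divide_less_cancel)
    then have "k = l"
      by linarith
    then show ?thesis
      using kl by simp
  qed
  then show False
    using \<open>x \<noteq> y\<close> euclidean_eqI[of x y] by blast
qed

lemma lattice_point_in_hcube_eq:
  assumes "0 < h" "x \<in> lattice_points h" "y \<in> lattice_points h" "y \<in> hcube h x"
  shows "y = x"
  using hcube_disjoint[OF assms(1,2,3)] mem_hcube_self[OF assms(1), of y] assms(4) by blast

lemma lattice_points_add_scaled:
  assumes "x \<in> lattice_points (h\<^sup>2)" "v \<in> lattice_points h"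
  shows "x + (1 / h) *\<^sub>R v \<in> lattice_points (h\<^sup>2)"
  unfolding lattice_points_def
proof (intro CollectI ballI)
  fix b :: 'a assume b: "b \<in> Basis"
  obtain k l :: int where "x \<bullet> b = of_int k / h\<^sup>2" "v \<bullet> b = of_int l / h"
    using assms b unfolding lattice_points_def by blast
  then have "(x + (1 / h) *\<^sub>R v) \<bullet> b = of_int (k + l) / h\<^sup>2"
    by (simp add: inner_add_left add_divide_distrib power2_eq_square)
  then show "\<exists>k::int. (x + (1 / h) *\<^sub>R v) \<bullet> b = of_int k / h\<^sup>2" ..
qed

lemma finite_lattice_points_box:
  assumes h: "0 < h"
  shows "finite {x \<in> lattice_points h. \<forall>b\<in>Basis. \<bar>x \<bullet> b\<bar> \<le> r}"
    (is "finite ?S")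
proof -
  define C where "C = (\<lambda>k::int. of_int k / h) ` {-\<lceil>r * h\<rceil>..\<lceil>r * h\<rceil>}"
  have "?S \<subseteq> (\<lambda>f. \<Sum>b\<in>Basis. f b *\<^sub>R b) ` PiE Basis (\<lambda>_. C)"
  proof
    fix x assume x: "x \<in> ?S"
    have "x \<bullet> b \<in> C" if b: "b \<in> Basis" for b
    proof -
      obtain k :: int where k: "x \<bullet> b = of_int k / h"
        using x b unfolding lattice_points_def by blast
      have "\<bar>of_int k\<bar> \<le> r * h"
        using x b k h by (auto simp: abs_divide pos_divide_le_eq)
      then have "k \<in> {-\<lceil>r * h\<rceil>..\<lceil>r * h\<rceil>}"
        by (auto simp: abs_le_iff) linarith+
      then show ?thesis
        unfolding C_def using k by blast
    qed
    then have "restrict (\<lambda>b. x \<bullet> b) Basis \<in> PiE Basis (\<lambda>_. C)"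
      by auto
    moreover have "x = (\<Sum>b\<in>Basis. restrict (\<lambda>b. x \<bullet> b) Basis b *\<^sub>R b)"
      by (simp add: euclidean_representation)
    ultimately show "x \<in> (\<lambda>f. \<Sum>b\<in>Basis. f b *\<^sub>R b) ` PiE Basis (\<lambda>_. C)"
      by blast
  qed
  moreover have "finite (PiE (Basis::'a set) (\<lambda>_. C))"
    unfolding C_def by (intro finite_PiE) auto
  ultimately show ?thesis
    by (meson finite_imageI finite_subset)
qed

lemma finite_lat_x: "1 \<le> N \<Longrightarrow> finite (lat_x N)"
  unfolding lat_x_eq by (rule finite_lattice_points_box) simp

lemma finite_lat_v: "1 \<le> N \<Longrightarrow> finite (lat_v N)"
  unfolding lat_v_eq by (rule finite_lattice_points_box) simp

lemma lat_x_subset: "lat_x N \<subseteq> lattice_points ((real N)\<^sup>2)"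
  unfolding lat_x_eq by auto

lemma lat_v_subset: "lat_v N \<subseteq> lattice_points (real N)"
  unfolding lat_v_eq by auto

lemma mem_lat_x:
  assumes "x \<in> lattice_points ((real N)\<^sup>2)" "norm x \<le> real N"
  shows "x \<in> lat_x N"
  using assms Basis_le_norm[of _ x] unfolding lat_x_eq by (auto intro: order_trans)

lemma abs_floor_mult_le:
  assumes y: "\<bar>y\<bar> < real n"
  shows "\<bar>real_of_int \<lfloor>real n * y\<rfloor>\<bar> \<le> real n * real n"
proof -
  have n: "0 < real n"
    using y by linarith
  have lo: "- real n < y" and hi: "y < real n"
    using y by (simp_all add: abs_less_iff)
  have bound: "real n * (- real n) < real n * y" "real n * y < real n * real n"
    using mult_strict_left_mono[OF lo n] mult_strict_left_mono[OF hi n] .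
  then have "- (int n * int n) \<le> \<lfloor>real n * y\<rfloor>"
    unfolding le_floor_iff by simp
  then have "real_of_int (- (int n * int n)) \<le> of_int \<lfloor>real n * y\<rfloor>"
    by (simp only: of_int_le_iff)
  then show ?thesis
    using of_int_floor_le[of "real n * y"] bound(2) by simp linarith
qed

lemma exists_lat_v_cell:
  fixes w :: "'a::euclidean_space"
  assumes N: "1 \<le> N" and w: "norm w < real N"
  shows "\<exists>v\<in>lat_v N. w \<in> cellQ' N v"
proof -
  define k where "k b = \<lfloor>real N * (w \<bullet> b)\<rfloor>" for b
  define v :: 'a where "v = (\<Sum>b\<in>Basis. (of_int (k b) / real N) *\<^sub>R b)"
  have N0: "0 < real N"
    using N by simp
  have v: "v \<bullet> b = of_int (k b) / real N" if "b \<in> Basis" for b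
    using that unfolding v_def by (simp add: inner_sum_left_Basis)
  have floor: "of_int (k b) \<le> real N * (w \<bullet> b)" "real N * (w \<bullet> b) < of_int (k b) + 1" for b
    unfolding k_def by linarith+
  have "\<bar>v \<bullet> b\<bar> \<le> real N" if b: "b \<in> Basis" for b
  proof -
    have "\<bar>w \<bullet> b\<bar> < real N"
      using Basis_le_norm[OF b, of w] w by linarith
    then have "\<bar>of_int (k b)\<bar> \<le> real N * real N"
      unfolding k_def by (rule abs_floor_mult_le)
    then show ?thesis
      using v[OF b] N0 by (simp add: abs_divide pos_divide_le_eq)
  qed
  then have "v \<in> lat_v N"
    unfolding lat_v_def using v by blast
  moreover have "w \<in> cellQ' N v"
    unfolding cellQ'_def
  proof (intro CollectI ballI conjI)
    fix b :: 'a assume b: "b \<in> Basis"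
    show "v \<bullet> b \<le> w \<bullet> b"
      using floor(1)[of b] N0 by (simp add: v[OF b] pos_divide_le_eq mult.commute)
    have "w \<bullet> b < (of_int (k b) + 1) / real N"
      using floor(2)[of b] N0 by (simp add: pos_less_divide_eq mult.commute)
    then show "w \<bullet> b < v \<bullet> b + 1 / real N"
      by (simp add: v[OF b] add_divide_distrib)
  qed
  ultimately show ?thesis ..
qed

lemma sum_measure_disjoint_le:
  assumes M: "fbm M" and I: "finite I" and A: "\<And>i. i \<in> I \<Longrightarrow> A i \<in> sets borel"
    and disj: "disjoint_family_on A I"
  shows "(\<Sum>i\<in>I. measure M (A i)) \<le> measure M UNIV"
proof -
  interpret finite_measure M
    using M unfolding fbm_def by auto
  have "(\<Sum>i\<in>I. measure M (A i)) = measure M (\<Union>i\<in>I. A i)"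
    using I A disj M unfolding fbm_def by (intro measure_finite_Union[symmetric]) auto
  also have "\<dots> \<le> measure M UNIV"
    using bounded_measure[of "\<Union>i\<in>I. A i"] space_fbm[OF M] by simp
  finally show ?thesis .
qed

lemma sum_mx_le_mass:
  assumes "fbm M" "1 \<le> N"
  shows "(\<Sum>x\<in>lat_x N. mx N M x) \<le> measure M UNIV"
  unfolding mx_def cellQ_eq_hcube
proof (rule sum_measure_disjoint_le[OF assms(1) finite_lat_x[OF assms(2)]])
  show "disjoint_family_on (hcube ((real N)\<^sup>2)) (lat_x N)"
    unfolding disjoint_family_on_def
  proof (intro ballI impI)
    fix x y assume "x \<in> lat_x N" "y \<in> lat_x N" "x \<noteq> y"
    then show "hcube ((real N)\<^sup>2) x \<inter> hcube ((real N)\<^sup>2) y = {}"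
      using lat_x_subset assms(2) by (intro hcube_disjoint) auto
  qed
qed simp

lemma sum_mv_le_mass:
  assumes "fbm M" "1 \<le> N"
  shows "(\<Sum>(x,v)\<in>lat_x N \<times> lat_v N. mv N M x v) \<le> measure M UNIV"
  unfolding mv_def case_prod_beta cellQ_eq_hcube cellQ'_eq_hcube
proof (rule sum_measure_disjoint_le[OF assms(1)])
  show "finite (lat_x N \<times> lat_v N)"
    using finite_lat_x finite_lat_v assms(2) by blast
  show "disjoint_family_on (\<lambda>q. hcube ((real N)\<^sup>2) (fst q) \<times> hcube (real N) (snd q)) (lat_x N \<times> lat_v N)"
    unfolding disjoint_family_on_def
  proof (intro ballI impI)
    fix q q' assume q: "q \<in> lat_x N \<times> lat_v N" "q' \<in> lat_x N \<times> lat_v N" "q \<noteq> q'"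
    have lat: "fst q \<in> lattice_points ((real N)\<^sup>2)" "fst q' \<in> lattice_points ((real N)\<^sup>2)"
      "snd q \<in> lattice_points (real N)" "snd q' \<in> lattice_points (real N)"
      using q lat_x_subset lat_v_subset by (auto simp: mem_Times_iff)
    consider "fst q \<noteq> fst q'" | "snd q \<noteq> snd q'"
      using q(3) by (metis prod_eqI)
    then show "(hcube ((real N)\<^sup>2) (fst q) \<times> hcube (real N) (snd q)) \<inter>
        (hcube ((real N)\<^sup>2) (fst q') \<times> hcube (real N) (snd q')) = {}"
    proof cases
      case 1
      then have "hcube ((real N)\<^sup>2) (fst q) \<inter> hcube ((real N)\<^sup>2) (fst q') = {}"
        using lat assms(2) by (intro hcube_disjoint) auto
      then show ?thesis by auto
    next
      case 2
      then have "hcube (real N) (snd q) \<inter> hcube (real N) (snd q') = {}"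
        using lat assms(2) by (intro hcube_disjoint) auto
      then show ?thesis by auto
    qed
  qed
qed (auto intro!: borel_Times)

lemma sum_mv_eq_measure_Union:
  assumes W: "fbm W" and N: "1 \<le> N"
  shows "(\<Sum>v\<in>lat_v N. mv N W x v) = measure W (\<Union>v\<in>lat_v N. cellQ N x \<times> cellQ' N v)"
  unfolding mv_def
proof (rule measure_finite_Union[symmetric])
  have sW: "sets W = sets borel" and "finite_measure W"
    using W unfolding fbm_def by auto
  show "finite (lat_v N)"
    by (rule finite_lat_v[OF N])
  show "(\<lambda>v. cellQ N x \<times> cellQ' N v) ` lat_v N \<subseteq> sets W"
    unfolding sW by (auto simp: cellQ_eq_hcube cellQ'_eq_hcube intro!: borel_Times)
  show "disjoint_family_on (\<lambda>v. cellQ N x \<times> cellQ' N v) (lat_v N)"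
    unfolding disjoint_family_on_def
  proof (intro ballI impI)
    fix v w assume "v \<in> lat_v N" "w \<in> lat_v N" "v \<noteq> w"
    then have "cellQ' N v \<inter> cellQ' N w = {}"
      unfolding cellQ'_eq_hcube using lat_v_subset N by (intro hcube_disjoint) auto
    then show "(cellQ N x \<times> cellQ' N v) \<inter> (cellQ N x \<times> cellQ' N w) = {}"
      by auto
  qed
  show "emeasure W (cellQ N x \<times> cellQ' N v) \<noteq> \<infinity>" for v
    using \<open>finite_measure W\<close> by (simp add: finite_measure.emeasure_eq_measure)
qed

section \<open>The lattice scheme as a point measure\<close>

(* Atoms of lat_step: Inl x carries the source mass created at x, Inr (x, v) the mass of
   the cell Q_x \<times> Q'_v, transported with velocity v. *)
definition step_weight :: "nat \<Rightarrow> ('a::euclidean_space measure \<Rightarrow> 'a measure)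
    \<Rightarrow> ('a measure \<Rightarrow> ('a \<times> 'a) measure) \<Rightarrow> ('a \<Rightarrow> 'a measure \<Rightarrow> real)
    \<Rightarrow> 'a measure \<Rightarrow> real \<Rightarrow> 'a + 'a \<times> 'a \<Rightarrow> real" where
  "step_weight N s V c \<mu> \<tau> =
     case_sum (\<lambda>x. \<tau> * mx N (s \<mu>) x) (\<lambda>(x, v). mv N (V \<mu>) x v * exp (c x \<mu> * \<tau>))"

definition step_point :: "real \<Rightarrow> 'a::euclidean_space + 'a \<times> 'a \<Rightarrow> 'a" where
  "step_point \<tau> = case_sum (\<lambda>x. x) (\<lambda>(x, v). x + \<tau> *\<^sub>R v)"

lemma step_weight_nonneg: "0 \<le> \<tau> \<Longrightarrow> 0 \<le> step_weight N s V c \<mu> \<tau> k"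
  unfolding step_weight_def mx_def mv_def by (cases k) auto

lemma lat_step_eq_discrete_measure:
  assumes "1 \<le> N"
  shows "lat_step N s V c \<mu> \<tau> =
    discrete_measure (lat_x N <+> lat_x N \<times> lat_v N) (step_weight N s V c \<mu> \<tau>) (step_point \<tau>)"
proof -
  have fin: "finite (lat_x N)" "finite (lat_x N \<times> lat_v N)"
    using assms finite_lat_x finite_lat_v by auto
  show ?thesis
    unfolding lat_step_def discrete_measure_def
    by (simp only: sum.Plus[OF fin] comp_def step_weight_def step_point_def sum.case case_prod_unfold)
qed

lemma lat_init_eq_discrete_measure: "lat_init N \<mu>0 = discrete_measure (lat_x N) (mx N \<mu>0) (\<lambda>x. x)"
  unfolding lat_init_def discrete_measure_def ..

lemma fbm_lat_step: "1 \<le> N \<Longrightarrow> fbm (lat_step N s V c \<mu> \<tau>)"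
  by (simp add: lat_step_eq_discrete_measure fbm_discrete_measure finite_lat_x finite_lat_v)

lemma fbm_lat_init: "1 \<le> N \<Longrightarrow> fbm (lat_init N \<mu>0)"
  by (simp add: lat_init_eq_discrete_measure fbm_discrete_measure finite_lat_x)

lemma integral_lat_step:
  assumes N: "1 \<le> N" and \<tau>: "0 \<le> \<tau>" and f: "f \<in> borel_measurable borel"
  shows "integral\<^sup>L (lat_step N s V c \<mu> \<tau>) f =
    \<tau> * (\<Sum>x\<in>lat_x N. mx N (s \<mu>) x * f x) +
    (\<Sum>(x, v)\<in>lat_x N \<times> lat_v N. mv N (V \<mu>) x v * exp (c x \<mu> * \<tau>) * f (x + \<tau> *\<^sub>R v))"
proof -
  have fin: "finite (lat_x N)" "finite (lat_x N \<times> lat_v N)"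
    using N finite_lat_x finite_lat_v by auto
  have "integral\<^sup>L (lat_step N s V c \<mu> \<tau>) f =
      (\<Sum>k\<in>lat_x N <+> lat_x N \<times> lat_v N. step_weight N s V c \<mu> \<tau> k * f (step_point \<tau> k))"
    unfolding lat_step_eq_discrete_measure[OF N]
    using fin step_weight_nonneg[OF \<tau>] f by (intro integral_discrete_measure) auto
  then show ?thesis
    by (simp add: sum.Plus[OF fin] step_weight_def step_point_def case_prod_unfold
        sum_distrib_left mult.assoc)
qed

lemma mass_lat_step:
  assumes N: "1 \<le> N" and \<tau>: "0 \<le> \<tau>"
  shows "measure (lat_step N s V c \<mu> \<tau>) UNIV =
    \<tau> * (\<Sum>x\<in>lat_x N. mx N (s \<mu>) x) +
    (\<Sum>(x, v)\<in>lat_x N \<times> lat_v N. mv N (V \<mu>) x v * exp (c x \<mu> * \<tau>))"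
proof -
  have "measure (lat_step N s V c \<mu> \<tau>) UNIV = integral\<^sup>L (lat_step N s V c \<mu> \<tau>) (\<lambda>_. 1)"
    using space_fbm[OF fbm_lat_step[OF N, of s V c \<mu> \<tau>]] by simp
  also have "\<dots> = \<tau> * (\<Sum>x\<in>lat_x N. mx N (s \<mu>) x) +
      (\<Sum>(x, v)\<in>lat_x N \<times> lat_v N. mv N (V \<mu>) x v * exp (c x \<mu> * \<tau>))"
    using integral_lat_step[OF N \<tau>, of "\<lambda>_. 1"] by simp
  finally show ?thesis .
qed

definition lattice_supported :: "nat \<Rightarrow> real \<Rightarrow> 'a::euclidean_space measure \<Rightarrow> bool" where
  "lattice_supported N \<rho> \<mu> \<longleftrightarrow> fbm \<mu> \<and>
     (\<exists>A. finite A \<and> A \<subseteq> lattice_points ((real N)\<^sup>2) \<inter> cball 0 \<rho> \<and> (AE x in \<mu>. x \<in> A))"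

lemma lattice_supported_mono: "lattice_supported N \<rho> \<mu> \<Longrightarrow> \<rho> \<le> \<rho>' \<Longrightarrow> lattice_supported N \<rho>' \<mu>"
  unfolding lattice_supported_def by (meson cball_subset_cball_iff order.trans inf_mono order_refl)

lemma lattice_supported_fbm: "lattice_supported N \<rho> \<mu> \<Longrightarrow> fbm \<mu>"
  unfolding lattice_supported_def by simp

lemma lattice_supported_discrete_measure:
  assumes "finite K"
    and "\<And>k. k \<in> K \<Longrightarrow> 0 < w k \<Longrightarrow> p k \<in> lattice_points ((real N)\<^sup>2) \<and> norm (p k) \<le> \<rho>"
  shows "lattice_supported N \<rho> (discrete_measure K w p)"
  unfolding lattice_supported_def
  using assms fbm_discrete_measure AE_discrete_measure
  by (intro conjI exI[of _ "p ` {k\<in>K. 0 < w k}"]) auto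

lemma msupp_lattice_supported:
  assumes "lattice_supported N \<rho> \<mu>"
  shows "msupp \<mu> \<subseteq> lattice_points ((real N)\<^sup>2) \<inter> cball 0 \<rho>"
proof -
  obtain A where A: "finite A" "A \<subseteq> lattice_points ((real N)\<^sup>2) \<inter> cball 0 \<rho>" "AE x in \<mu>. x \<in> A"
    and "sets \<mu> = sets borel"
    using assms unfolding lattice_supported_def fbm_def by blast
  then have "msupp \<mu> \<subseteq> A"
    by (intro msupp_subset_closed finite_imp_closed)
  with A(2) show ?thesis
    by blast
qed

lemma mx_lattice_supported:
  assumes \<mu>: "lattice_supported N \<rho> \<mu>" and N: "1 \<le> N" and x: "x \<in> lattice_points ((real N)\<^sup>2)"
  shows "mx N \<mu> x = measure \<mu> {x}"
proof -
  obtain A where A: "finite A" "A \<subseteq> lattice_points ((real N)\<^sup>2)" "AE x in \<mu>. x \<in> A"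
    and M: "finite_measure \<mu>" "sets \<mu> = sets borel"
    using \<mu> unfolding lattice_supported_def fbm_def by blast
  have "indicator (cellQ N x) y = (indicator {x} y :: real)" if "y \<in> A" for y
    using that A(2) N x lattice_point_in_hcube_eq[of "(real N)\<^sup>2" x y] mem_hcube_self[of "(real N)\<^sup>2" x]
    by (auto simp: cellQ_eq_hcube indicator_def)
  then show ?thesis
    unfolding mx_def
    by (simp add: measure_concentrated_on_finite[OF M A(1,3)] cellQ_eq_hcube)
qed

lemma integral_lattice_supported:
  assumes \<mu>: "lattice_supported N \<rho> \<mu>" and N: "1 \<le> N" and \<rho>: "\<rho> \<le> real N"
    and f: "f \<in> borel_measurable borel"
  shows "integral\<^sup>L \<mu> f = (\<Sum>x\<in>lat_x N. mx N \<mu> x * f x)"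
proof -
  obtain A where A: "finite A" "A \<subseteq> lattice_points ((real N)\<^sup>2) \<inter> cball 0 \<rho>" "AE x in \<mu>. x \<in> A"
    and M: "finite_measure \<mu>" "sets \<mu> = sets borel"
    using \<mu> unfolding lattice_supported_def fbm_def by blast
  have "A \<subseteq> lat_x N"
    using A(2) \<rho> by (auto intro!: mem_lat_x)
  have null: "measure \<mu> {x} = 0" if "x \<notin> A" for x
    using measure_concentrated_on_finite[OF M A(1,3), of "{x}"] that
    by (auto simp: indicator_def intro!: sum.neutral)
  have "integral\<^sup>L \<mu> f = (\<Sum>x\<in>A. measure \<mu> {x} * f x)"
    by (rule integral_concentrated_on_finite[OF M A(1,3) f])
  also have "\<dots> = (\<Sum>x\<in>lat_x N. measure \<mu> {x} * f x)"
    using \<open>A \<subseteq> lat_x N\<close> null finite_lat_x[OF N] by (intro sum.mono_neutral_left) auto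
  also have "\<dots> = (\<Sum>x\<in>lat_x N. mx N \<mu> x * f x)"
    using mx_lattice_supported[OF \<mu> N] lat_x_subset[of N] by (intro sum.cong) auto
  finally show ?thesis .
qed

lemma norm_le_if_mx_nonzero:
  fixes M :: "'a::euclidean_space measure"
  assumes M: "sets M = sets borel" and supp: "msupp M \<subseteq> cball 0 r" and N: "1 \<le> N"
    and mx: "mx N M x \<noteq> 0"
  shows "norm x \<le> r + real DIM('a)"
proof -
  obtain y where y: "y \<in> cellQ N x" "y \<in> msupp M"
    using exists_msupp_if_measure_nonzero[OF M _ mx[unfolded mx_def]] by (auto simp: cellQ_eq_hcube)
  have "norm (y - x) \<le> real DIM('a) / (real N)\<^sup>2"
    using y(1) norm_diff_le_hcube by (simp add: cellQ_eq_hcube)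
  also have "\<dots> \<le> real DIM('a)"
    using N by (simp add: divide_le_eq one_le_power)
  finally show ?thesis
    using y(2) supp norm_triangle_ineq3[of y x] by (auto simp: subset_iff)
qed

lemma lattice_supported_lat_init:
  fixes \<mu>0 :: "'a::euclidean_space measure"
  assumes N: "1 \<le> N" and \<mu>0: "fbm \<mu>0" and supp: "msupp \<mu>0 \<subseteq> cball 0 r0"
  shows "lattice_supported N (r0 + real DIM('a)) (lat_init N \<mu>0)"
  unfolding lat_init_eq_discrete_measure
proof (rule lattice_supported_discrete_measure)
  fix x assume "x \<in> lat_x N" "0 < mx N \<mu>0 x"
  then show "x \<in> lattice_points ((real N)\<^sup>2) \<and> norm x \<le> r0 + real DIM('a)"
    using lat_x_subset \<mu>0 supp N norm_le_if_mx_nonzero[of \<mu>0 r0 N x] by (auto simp: fbm_def)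
qed (use finite_lat_x[OF N] in auto)

lemma abs_exp_diff_le: "\<bar>exp a - exp b\<bar> \<le> exp (max a b) * \<bar>a - b\<bar>" for a b :: real
proof -
  have le: "exp y - exp x \<le> exp y * (y - x)" for x y :: real
    using mult_left_mono[OF exp_ge_add_one_self[of "x - y"], of "exp y"]
    by (simp add: exp_diff algebra_simps)
  show ?thesis
    using le[of a b] le[of b a] by (cases "a \<le> b") (simp_all add: abs_if max_def)
qed

lemma abs_weighted_transport_diff_le:
  fixes \<psi> :: "'a::real_normed_vector \<Rightarrow> real"
  assumes \<psi>: "\<psi> \<in> BL1" and c: "\<bar>c\<bar> \<le> C" and v: "norm v \<le> B"
    and \<tau>1: "\<tau>1 \<in> {0..1}" and \<tau>2: "\<tau>2 \<in> {0..1}"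
  shows "\<bar>exp (c * \<tau>1) * \<psi> (x + \<tau>1 *\<^sub>R v) - exp (c * \<tau>2) * \<psi> (x + \<tau>2 *\<^sub>R v)\<bar>
    \<le> \<bar>\<tau>1 - \<tau>2\<bar> * (C * exp C + exp C * B)"
proof -
  let ?d = "\<bar>\<tau>1 - \<tau>2\<bar>"
  have exponent: "c * \<tau> \<le> C" if "\<tau> \<in> {0..1}" for \<tau>
    using that c mult_mono[of "\<bar>c\<bar>" C \<tau> 1] by (auto intro: order_trans[OF mult_right_mono[of c "\<bar>c\<bar>"]])
  have "\<bar>exp (c * \<tau>1) - exp (c * \<tau>2)\<bar> \<le> exp (max (c * \<tau>1) (c * \<tau>2)) * (\<bar>c\<bar> * ?d)"
    using abs_exp_diff_le[of "c * \<tau>1" "c * \<tau>2"] by (simp add: abs_mult flip: right_diff_distrib)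
  also have "\<dots> \<le> exp C * (C * ?d)"
    using exponent[OF \<tau>1] exponent[OF \<tau>2] c by (intro mult_mono) (auto intro: mult_right_mono)
  finally have exp_diff: "\<bar>exp (c * \<tau>1) - exp (c * \<tau>2)\<bar> \<le> exp C * (C * ?d)" .
  have "\<bar>\<psi> (x + \<tau>1 *\<^sub>R v) - \<psi> (x + \<tau>2 *\<^sub>R v)\<bar> \<le> dist (x + \<tau>1 *\<^sub>R v) (x + \<tau>2 *\<^sub>R v)"
    by (rule BL1_lipschitz[OF \<psi>])
  also have "\<dots> = ?d * norm v"
    by (simp add: dist_norm flip: scaleR_diff_left)
  also have "\<dots> \<le> ?d * B"
    using v by (intro mult_left_mono) auto
  finally have \<psi>_diff: "\<bar>\<psi> (x + \<tau>1 *\<^sub>R v) - \<psi> (x + \<tau>2 *\<^sub>R v)\<bar> \<le> ?d * B" .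
  have "exp (c * \<tau>1) * \<psi> (x + \<tau>1 *\<^sub>R v) - exp (c * \<tau>2) * \<psi> (x + \<tau>2 *\<^sub>R v) =
      (exp (c * \<tau>1) - exp (c * \<tau>2)) * \<psi> (x + \<tau>1 *\<^sub>R v)
      + exp (c * \<tau>2) * (\<psi> (x + \<tau>1 *\<^sub>R v) - \<psi> (x + \<tau>2 *\<^sub>R v))"
    by (simp add: algebra_simps)
  also have "\<bar>\<dots>\<bar> \<le> \<bar>exp (c * \<tau>1) - exp (c * \<tau>2)\<bar> + exp C * (?d * B)"
  proof (rule order_trans[OF abs_triangle_ineq add_mono])
    show "\<bar>(exp (c * \<tau>1) - exp (c * \<tau>2)) * \<psi> (x + \<tau>1 *\<^sub>R v)\<bar> \<le> \<bar>exp (c * \<tau>1) - exp (c * \<tau>2)\<bar>"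
      using BL1_abs_le[OF \<psi>] by (simp add: abs_mult mult_left_le)
    show "\<bar>exp (c * \<tau>2) * (\<psi> (x + \<tau>1 *\<^sub>R v) - \<psi> (x + \<tau>2 *\<^sub>R v))\<bar> \<le> exp C * (?d * B)"
      unfolding abs_mult using exponent[OF \<tau>2] \<psi>_diff by (intro mult_mono) auto
  qed
  also have "\<dots> \<le> ?d * (C * exp C + exp C * B)"
    using exp_diff by (simp add: algebra_simps)
  finally show ?thesis .
qed

lemma mass_growth_step:
  fixes \<tau> m m0 a S L C :: real
  assumes "0 \<le> \<tau>" "0 \<le> m" "0 \<le> S" "0 \<le> L" "0 \<le> C" "0 \<le> a"
    and m: "m \<le> (m0 + S * a) * exp ((L + C) * a)"
  shows "\<tau> * (S + L * m) + exp (C * \<tau>) * m \<le> (m0 + S * (a + \<tau>)) * exp ((L + C) * (a + \<tau>))"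
proof -
  have "\<tau> * L * m + exp (C * \<tau>) * m \<le> exp (C * \<tau>) * (1 + L * \<tau>) * m"
    using assms mult_right_mono[of 1 "exp (C * \<tau>)" "\<tau> * L * m"] by (simp add: algebra_simps)
  also have "\<dots> \<le> exp (C * \<tau>) * exp (L * \<tau>) * m"
    using assms exp_ge_add_one_self[of "L * \<tau>"] by (intro mult_right_mono mult_left_mono) auto
  also have "\<dots> = exp ((L + C) * \<tau>) * m"
    by (simp add: algebra_simps flip: exp_add)
  also have "\<dots> \<le> exp ((L + C) * \<tau>) * ((m0 + S * a) * exp ((L + C) * a))"
    using m by (intro mult_left_mono) auto
  also have "\<dots> = (m0 + S * a) * exp ((L + C) * (a + \<tau>))"
    by (simp add: algebra_simps flip: exp_add)
  finally have transport: "\<tau> * L * m + exp (C * \<tau>) * m \<le> (m0 + S * a) * exp ((L + C) * (a + \<tau>))" .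
  have "\<tau> * S \<le> S * \<tau> * exp ((L + C) * (a + \<tau>))"
    using assms mult_left_mono[of 1 "exp ((L + C) * (a + \<tau>))" "S * \<tau>"] by (simp add: mult.commute)
  with transport show ?thesis
    by (simp add: algebra_simps)
qed

lemma lipschitz_on_uniform_pieces:
  fixes f :: "real \<Rightarrow> real"
  assumes h: "0 < h" and K: "0 \<le> K"
    and pieces: "\<And>l::nat. real l * h \<le> T \<Longrightarrow> K-lipschitz_on {real l * h .. min (real (Suc l) * h) T} f"
  shows "K-lipschitz_on {0..T} f"
proof -
  have "K-lipschitz_on {0 .. min (real n * h) T} f" for n
  proof (induction n)
    case 0
    show ?case
      using K by (intro lipschitz_onI) auto
  next
    case (Suc n)
    show ?case
    proof (cases "real n * h \<le> T")
      case True
      then have "K-lipschitz_on {0 .. min (real (Suc n) * h) T} (\<lambda>t. if t \<le> real n * h then f t else f t)"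
        using Suc.IH pieces[OF True] by (intro lipschitz_on_concat) simp_all
      then show ?thesis
        by simp
    next
      case False
      then have "min (real (Suc n) * h) T = min (real n * h) T"
        using h by (simp add: min_def distrib_right)
      then show ?thesis
        using Suc.IH by simp
    qed
  qed
  moreover obtain n where "T \<le> real n * h"
    using reals_Archimedean3[OF h] by (meson less_imp_le)
  ultimately show ?thesis
    by (metis min.absorb2)
qed

section \<open>Bounds for one step of the scheme\<close>

locale lattice_scheme =
  fixes V :: "'a::euclidean_space measure \<Rightarrow> ('a \<times> 'a) measure"
    and s :: "'a measure \<Rightarrow> 'a measure" and c :: "'a \<Rightarrow> 'a measure \<Rightarrow> real"
    and C_S L R C_b :: real
  assumes V: "\<And>\<mu>. fbm \<mu> \<Longrightarrow> fbm (V \<mu>) \<and> distr (V \<mu>) borel fst = \<mu>"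
    and V1: "\<And>\<mu> r. fbm \<mu> \<Longrightarrow> (\<forall>p\<in>msupp (V \<mu>). norm (fst p) \<le> r) \<Longrightarrow>
                 (\<forall>p\<in>msupp (V \<mu>). norm (snd p) \<le> C_S * (1 + r))"
    and S: "\<And>\<mu>. fbm \<mu> \<Longrightarrow> fbm (s \<mu>)"
    and S1: "\<And>\<mu> \<nu>. fbm \<mu> \<Longrightarrow> fbm \<nu> \<Longrightarrow> bl_dist (s \<mu>) (s \<nu>) \<le> L * bl_dist \<mu> \<nu>"
    and S2: "\<And>\<mu>. fbm \<mu> \<Longrightarrow> msupp (s \<mu>) \<subseteq> ball 0 R"
    and C1: "\<And>x \<mu>. fbm \<mu> \<Longrightarrow> \<bar>c x \<mu>\<bar> \<le> C_b"
    and nonneg: "0 \<le> C_S" "0 \<le> L" "0 \<le> R" "0 \<le> C_b"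
begin

definition s_mass0 :: real where
  "s_mass0 = measure (s (null_measure borel)) UNIV"

(* The summand DIM('a) bounds the diameter of a velocity cell: mv locates a velocity
   only up to its cell. *)
definition speed_bound :: "real \<Rightarrow> real" where
  "speed_bound \<rho> = C_S * (1 + \<rho>) + real DIM('a)"

lemma s_mass0_nonneg: "0 \<le> s_mass0"
  unfolding s_mass0_def by simp

lemma speed_bound_nonneg: "0 \<le> \<rho> \<Longrightarrow> 0 \<le> speed_bound \<rho>"
  unfolding speed_bound_def using nonneg by simp

lemma mass_V: "fbm \<mu> \<Longrightarrow> measure (V \<mu>) UNIV = measure \<mu> UNIV"
  using emeasure_marginal[of "V \<mu>" \<mu> UNIV] V[of \<mu>] by (simp add: fbm_def measure_def)

lemma mass_s_le:
  assumes \<mu>: "fbm \<mu>"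
  shows "measure (s \<mu>) UNIV \<le> s_mass0 + L * measure \<mu> UNIV"
proof -
  have "measure (s \<mu>) UNIV - s_mass0 \<le> bl_dist (s \<mu>) (s (null_measure borel))"
    unfolding s_mass0_def by (intro mass_diff_le_bl_dist S \<mu> fbm_null_measure)
  also have "\<dots> \<le> L * bl_dist \<mu> (null_measure borel)"
    by (intro S1 \<mu> fbm_null_measure)
  also have "\<dots> \<le> L * measure \<mu> UNIV"
    using bl_dist_null_measure_le[OF \<mu>] nonneg by (intro mult_left_mono) auto
  finally show ?thesis
    by simp
qed

lemma norm_snd_le_msupp_V:
  assumes \<mu>: "fbm \<mu>" and supp: "msupp \<mu> \<subseteq> cball 0 \<rho>" and q: "q \<in> msupp (V \<mu>)"
  shows "norm (snd q) \<le> C_S * (1 + \<rho>)"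
proof -
  have "\<forall>p\<in>msupp (V \<mu>). norm (fst p) \<le> \<rho>"
    using msupp_marginal[of "V \<mu>" \<mu>] V[OF \<mu>] supp by (auto simp: fbm_def subset_iff)
  then show ?thesis
    using V1[OF \<mu>] q by blast
qed

lemma mv_nonzero_bounds:
  assumes \<mu>: "lattice_supported N \<rho> \<mu>" and N: "1 \<le> N" and x: "x \<in> lat_x N"
    and mv: "mv N (V \<mu>) x v \<noteq> 0"
  shows "norm x \<le> \<rho> \<and> norm v \<le> speed_bound \<rho>"
proof -
  have fbm: "fbm \<mu>"
    using \<mu> by (rule lattice_supported_fbm)
  then have sV: "sets (V \<mu>) = sets borel" and marg: "distr (V \<mu>) borel fst = \<mu>"
    using V unfolding fbm_def by auto
  have "cellQ N x \<times> cellQ' N v \<in> sets borel"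
    by (simp add: cellQ_eq_hcube cellQ'_eq_hcube borel_Times)
  then obtain q where q: "fst q \<in> cellQ N x" "snd q \<in> cellQ' N v" "q \<in> msupp (V \<mu>)"
    using exists_msupp_if_measure_nonzero[OF sV _ mv[unfolded mv_def]] by fastforce
  have supp: "msupp \<mu> \<subseteq> lattice_points ((real N)\<^sup>2) \<inter> cball 0 \<rho>"
    by (rule msupp_lattice_supported[OF \<mu>])
  then have "fst q \<in> lattice_points ((real N)\<^sup>2) \<inter> cball 0 \<rho>"
    using msupp_marginal[OF sV marg q(3)] by blast
  moreover have "x \<in> lattice_points ((real N)\<^sup>2)"
    using x lat_x_subset by blast
  ultimately have "fst q = x"
    using q(1) N by (intro lattice_point_in_hcube_eq) (auto simp: cellQ_eq_hcube)
  with \<open>fst q \<in> lattice_points ((real N)\<^sup>2) \<inter> cball 0 \<rho>\<close> have "norm x \<le> \<rho>"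
    by simp
  have "norm (snd q) \<le> C_S * (1 + \<rho>)"
    using norm_snd_le_msupp_V[OF fbm _ q(3)] supp by blast
  moreover have "norm (snd q - v) \<le> real DIM('a)"
    using norm_diff_le_hcube[of "snd q" "real N" v] q(2) N
    by (simp add: cellQ'_eq_hcube divide_le_eq order_trans)
  ultimately have "norm v \<le> speed_bound \<rho>"
    unfolding speed_bound_def using norm_triangle_ineq3[of "snd q" v] by linarith
  with \<open>norm x \<le> \<rho>\<close> show ?thesis ..
qed

lemma lattice_supported_lat_step:
  assumes \<mu>: "lattice_supported N \<rho> \<mu>" and N: "1 \<le> N"
  shows "lattice_supported N (max (R + real DIM('a)) (\<rho> + speed_bound \<rho> / real N))
    (lat_step N s V c \<mu> (1 / real N))"
  unfolding lat_step_eq_discrete_measure[OF N]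
proof (rule lattice_supported_discrete_measure)
  show "finite (lat_x N <+> lat_x N \<times> lat_v N)"
    using N by (intro finite_Plus finite_cartesian_product finite_lat_x finite_lat_v)
next
  have fbm: "fbm \<mu>"
    using \<mu> by (rule lattice_supported_fbm)
  fix k assume k: "k \<in> lat_x N <+> lat_x N \<times> lat_v N" "0 < step_weight N s V c \<mu> (1 / real N) k"
  show "step_point (1 / real N) k \<in> lattice_points ((real N)\<^sup>2) \<and>
      norm (step_point (1 / real N) k) \<le> max (R + real DIM('a)) (\<rho> + speed_bound \<rho> / real N)"
  proof (cases k)
    case (Inl x)
    then have "x \<in> lat_x N" "mx N (s \<mu>) x \<noteq> 0"
      using k by (auto simp: step_weight_def)
    moreover have "msupp (s \<mu>) \<subseteq> cball 0 R"
      using S2[OF fbm] by auto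
    ultimately have "norm x \<le> R + real DIM('a)"
      using S[OF fbm] N by (intro norm_le_if_mx_nonzero) (auto simp: fbm_def)
    then show ?thesis
      using Inl \<open>x \<in> lat_x N\<close> lat_x_subset by (auto simp: step_point_def)
  next
    case (Inr q)
    then obtain x v where q: "k = Inr (x, v)" "x \<in> lat_x N" "v \<in> lat_v N"
      using k by (cases q) auto
    have "mv N (V \<mu>) x v \<noteq> 0"
      using k q(1) by (auto simp: step_weight_def)
    then have bounds: "norm x \<le> \<rho>" "norm v \<le> speed_bound \<rho>"
      using mv_nonzero_bounds[OF \<mu> N q(2) \<open>mv N (V \<mu>) x v \<noteq> 0\<close>] by blast+
    have "norm (x + (1 / real N) *\<^sub>R v) \<le> norm x + norm v / real N"
      using norm_triangle_ineq[of x "(1 / real N) *\<^sub>R v"] by simp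
    also have "\<dots> \<le> \<rho> + speed_bound \<rho> / real N"
      using bounds by (intro add_mono divide_right_mono) auto
    finally show ?thesis
      using q lat_x_subset lat_v_subset lattice_points_add_scaled[of x "real N" v]
      by (auto simp: step_point_def)
  qed
qed

lemma mass_lat_step_le:
  assumes \<mu>: "fbm \<mu>" and N: "1 \<le> N" and \<tau>: "0 \<le> \<tau>"
  shows "measure (lat_step N s V c \<mu> \<tau>) UNIV
    \<le> \<tau> * (s_mass0 + L * measure \<mu> UNIV) + exp (C_b * \<tau>) * measure \<mu> UNIV"
proof -
  have "\<tau> * (\<Sum>x\<in>lat_x N. mx N (s \<mu>) x) \<le> \<tau> * (s_mass0 + L * measure \<mu> UNIV)"
    using sum_mx_le_mass[OF S[OF \<mu>] N] mass_s_le[OF \<mu>] \<tau> by (intro mult_left_mono) auto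
  moreover have "(\<Sum>(x, v)\<in>lat_x N \<times> lat_v N. mv N (V \<mu>) x v * exp (c x \<mu> * \<tau>))
      \<le> (\<Sum>(x, v)\<in>lat_x N \<times> lat_v N. mv N (V \<mu>) x v * exp (C_b * \<tau>))"
    using abs_le_D1[OF C1[OF \<mu>]] \<tau> by (intro sum_mono) (auto simp: mv_def intro!: mult_left_mono mult_right_mono)
  moreover have "\<dots> = exp (C_b * \<tau>) * (\<Sum>(x, v)\<in>lat_x N \<times> lat_v N. mv N (V \<mu>) x v)"
    by (simp add: sum_distrib_left case_prod_unfold mult.commute)
  moreover have "\<dots> \<le> exp (C_b * \<tau>) * measure \<mu> UNIV"
    using sum_mv_le_mass[of "V \<mu>" N] V[OF \<mu>] mass_V[OF \<mu>] N by (intro mult_left_mono) auto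
  ultimately show ?thesis
    unfolding mass_lat_step[OF N \<tau>] by linarith
qed

lemma sum_mv_moment_le:
  assumes \<mu>: "lattice_supported N \<rho> \<mu>" and N: "1 \<le> N" and \<rho>: "0 \<le> \<rho>"
  shows "(\<Sum>(x, v)\<in>lat_x N \<times> lat_v N. mv N (V \<mu>) x v * (1 + norm v + (norm v)\<^sup>2))
    \<le> measure \<mu> UNIV * (1 + speed_bound \<rho> + (speed_bound \<rho>)\<^sup>2)"
proof -
  let ?B = "speed_bound \<rho>"
  have fbm: "fbm \<mu>"
    using \<mu> by (rule lattice_supported_fbm)
  have "(\<Sum>(x, v)\<in>lat_x N \<times> lat_v N. mv N (V \<mu>) x v * (1 + norm v + (norm v)\<^sup>2))
      \<le> (\<Sum>(x, v)\<in>lat_x N \<times> lat_v N. mv N (V \<mu>) x v * (1 + ?B + ?B\<^sup>2))"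
  proof (intro sum_mono, clarify)
    fix x v :: 'a assume "x \<in> lat_x N"
    then have "mv N (V \<mu>) x v \<noteq> 0 \<Longrightarrow> norm v \<le> ?B"
      using mv_nonzero_bounds[OF \<mu> N] by blast
    then show "mv N (V \<mu>) x v * (1 + norm v + (norm v)\<^sup>2) \<le> mv N (V \<mu>) x v * (1 + ?B + ?B\<^sup>2)"
      by (cases "mv N (V \<mu>) x v = 0") (auto simp: mv_def intro!: mult_left_mono add_mono power_mono)
  qed
  also have "\<dots> = (1 + ?B + ?B\<^sup>2) * (\<Sum>(x, v)\<in>lat_x N \<times> lat_v N. mv N (V \<mu>) x v)"
    by (simp add: sum_distrib_left case_prod_unfold mult.commute)
  also have "\<dots> \<le> (1 + ?B + ?B\<^sup>2) * measure \<mu> UNIV"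
    using sum_mv_le_mass[of "V \<mu>" N] V[OF fbm] mass_V[OF fbm] N speed_bound_nonneg[OF \<rho>]
    by (intro mult_left_mono) auto
  finally show ?thesis
    by (simp add: mult.commute)
qed

lemma abs_sum_mx_s_le:
  assumes \<mu>: "fbm \<mu>" and N: "1 \<le> N" and \<psi>: "\<psi> \<in> BL1"
  shows "\<bar>\<Sum>x\<in>lat_x N. mx N (s \<mu>) x * \<psi> x\<bar> \<le> s_mass0 + L * measure \<mu> UNIV"
proof -
  have "\<bar>\<Sum>x\<in>lat_x N. mx N (s \<mu>) x * \<psi> x\<bar> \<le> (\<Sum>x\<in>lat_x N. mx N (s \<mu>) x)"
    using BL1_abs_le[OF \<psi>]
    by (intro order_trans[OF sum_abs] sum_mono) (auto simp: abs_mult mx_def mult_left_le)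
  also have "\<dots> \<le> s_mass0 + L * measure \<mu> UNIV"
    using sum_mx_le_mass[OF S[OF \<mu>] N] mass_s_le[OF \<mu>] by linarith
  finally show ?thesis .
qed

lemma abs_transport_sum_diff_le:
  assumes \<mu>: "lattice_supported N \<rho> \<mu>" and N: "1 \<le> N" and \<rho>: "0 \<le> \<rho>" and \<psi>: "\<psi> \<in> BL1"
    and \<tau>1: "\<tau>1 \<in> {0..1}" and \<tau>2: "\<tau>2 \<in> {0..1}"
  shows "\<bar>(\<Sum>(x, v)\<in>lat_x N \<times> lat_v N. mv N (V \<mu>) x v * (exp (c x \<mu> * \<tau>1) * \<psi> (x + \<tau>1 *\<^sub>R v)))
      - (\<Sum>(x, v)\<in>lat_x N \<times> lat_v N. mv N (V \<mu>) x v * (exp (c x \<mu> * \<tau>2) * \<psi> (x + \<tau>2 *\<^sub>R v)))\<bar>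
    \<le> \<bar>\<tau>1 - \<tau>2\<bar> * (C_b * exp C_b + exp C_b * speed_bound \<rho>) * measure \<mu> UNIV"
proof -
  let ?g = "\<lambda>\<tau> x v. exp (c x \<mu> * \<tau>) * \<psi> (x + \<tau> *\<^sub>R v)"
  let ?d = "\<bar>\<tau>1 - \<tau>2\<bar>" and ?K = "C_b * exp C_b + exp C_b * speed_bound \<rho>"
  have fbm: "fbm \<mu>"
    using \<mu> by (rule lattice_supported_fbm)
  have "\<bar>(\<Sum>(x, v)\<in>lat_x N \<times> lat_v N. mv N (V \<mu>) x v * ?g \<tau>1 x v)
      - (\<Sum>(x, v)\<in>lat_x N \<times> lat_v N. mv N (V \<mu>) x v * ?g \<tau>2 x v)\<bar>
      = \<bar>\<Sum>(x, v)\<in>lat_x N \<times> lat_v N. mv N (V \<mu>) x v * (?g \<tau>1 x v - ?g \<tau>2 x v)\<bar>"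
    by (simp add: case_prod_unfold right_diff_distrib sum_subtractf)
  also have "\<dots> \<le> (\<Sum>(x, v)\<in>lat_x N \<times> lat_v N. mv N (V \<mu>) x v * \<bar>?g \<tau>1 x v - ?g \<tau>2 x v\<bar>)"
    by (rule order_trans[OF sum_abs]) (simp add: case_prod_unfold abs_mult mv_def)
  also have "\<dots> \<le> (\<Sum>(x, v)\<in>lat_x N \<times> lat_v N. mv N (V \<mu>) x v * (?d * ?K))"
  proof (intro sum_mono, clarify)
    fix x v :: 'a assume "x \<in> lat_x N"
    then have "mv N (V \<mu>) x v \<noteq> 0 \<Longrightarrow> norm v \<le> speed_bound \<rho>"
      using mv_nonzero_bounds[OF \<mu> N] by blast
    then have "mv N (V \<mu>) x v \<noteq> 0 \<Longrightarrow> \<bar>?g \<tau>1 x v - ?g \<tau>2 x v\<bar> \<le> ?d * ?K"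
      using abs_weighted_transport_diff_le[OF \<psi> C1[OF fbm] _ \<tau>1 \<tau>2] by blast
    then show "mv N (V \<mu>) x v * \<bar>?g \<tau>1 x v - ?g \<tau>2 x v\<bar> \<le> mv N (V \<mu>) x v * (?d * ?K)"
      by (cases "mv N (V \<mu>) x v = 0") (auto simp: mv_def intro!: mult_left_mono)
  qed
  also have "\<dots> = ?d * ?K * (\<Sum>(x, v)\<in>lat_x N \<times> lat_v N. mv N (V \<mu>) x v)"
    by (simp add: sum_distrib_right case_prod_unfold mult.commute)
  also have "\<dots> \<le> ?d * ?K * measure \<mu> UNIV"
    using sum_mv_le_mass[of "V \<mu>" N] V[OF fbm] mass_V[OF fbm] N nonneg speed_bound_nonneg[OF \<rho>]
    by (intro mult_left_mono) auto
  finally show ?thesis .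
qed

lemma lat_step_time_lipschitz:
  assumes \<mu>: "lattice_supported N \<rho> \<mu>" and N: "1 \<le> N" and \<rho>: "0 \<le> \<rho>" and \<psi>: "\<psi> \<in> BL1"
    and \<tau>1: "\<tau>1 \<in> {0..1}" and \<tau>2: "\<tau>2 \<in> {0..1}"
  shows "\<bar>integral\<^sup>L (lat_step N s V c \<mu> \<tau>1) \<psi> - integral\<^sup>L (lat_step N s V c \<mu> \<tau>2) \<psi>\<bar>
    \<le> \<bar>\<tau>1 - \<tau>2\<bar> * (s_mass0 + L * measure \<mu> UNIV
         + measure \<mu> UNIV * (C_b * exp C_b + exp C_b * speed_bound \<rho>))"
proof -
  let ?X = "\<Sum>x\<in>lat_x N. mx N (s \<mu>) x * \<psi> x"
  let ?Y = "\<lambda>\<tau>. \<Sum>(x, v)\<in>lat_x N \<times> lat_v N. mv N (V \<mu>) x v * (exp (c x \<mu> * \<tau>) * \<psi> (x + \<tau> *\<^sub>R v))"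
  have source: "\<bar>\<tau>1 * ?X - \<tau>2 * ?X\<bar> \<le> \<bar>\<tau>1 - \<tau>2\<bar> * (s_mass0 + L * measure \<mu> UNIV)"
    using abs_sum_mx_s_le[OF lattice_supported_fbm[OF \<mu>] N \<psi>]
    by (simp add: abs_mult mult_left_mono flip: left_diff_distrib)
  have "integral\<^sup>L (lat_step N s V c \<mu> \<tau>1) \<psi> - integral\<^sup>L (lat_step N s V c \<mu> \<tau>2) \<psi>
      = (\<tau>1 * ?X - \<tau>2 * ?X) + (?Y \<tau>1 - ?Y \<tau>2)"
    using \<tau>1 \<tau>2 BL1_borel_measurable[OF \<psi>] by (simp add: integral_lat_step[OF N] mult.assoc)
  then have "\<bar>integral\<^sup>L (lat_step N s V c \<mu> \<tau>1) \<psi> - integral\<^sup>L (lat_step N s V c \<mu> \<tau>2) \<psi>\<bar>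
      \<le> \<bar>\<tau>1 * ?X - \<tau>2 * ?X\<bar> + \<bar>?Y \<tau>1 - ?Y \<tau>2\<bar>"
    by (simp only: abs_triangle_ineq)
  also have "\<dots> \<le> \<bar>\<tau>1 - \<tau>2\<bar> * (s_mass0 + L * measure \<mu> UNIV)
      + \<bar>\<tau>1 - \<tau>2\<bar> * (C_b * exp C_b + exp C_b * speed_bound \<rho>) * measure \<mu> UNIV"
    using source abs_transport_sum_diff_le[OF \<mu> N \<rho> \<psi> \<tau>1 \<tau>2] by (rule add_mono)
  finally show ?thesis
    by (simp add: algebra_simps)
qed

lemma sum_mv_eq_mx:
  assumes \<mu>: "fbm \<mu>" and supp: "msupp \<mu> \<subseteq> cball 0 \<rho>" and N: "1 \<le> N"
    and slow: "C_S * (1 + \<rho>) < real N"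
  shows "(\<Sum>v\<in>lat_v N. mv N (V \<mu>) x v) = mx N \<mu> x"
proof -
  have sV: "sets (V \<mu>) = sets borel" and marg: "distr (V \<mu>) borel fst = \<mu>"
    using V[OF \<mu>] unfolding fbm_def by auto
  let ?U = "\<Union>v\<in>lat_v N. cellQ N x \<times> cellQ' N v"
  let ?Z = "cellQ N x \<times> UNIV - ?U"
  have U: "?U \<in> sets borel"
    using finite_lat_v[OF N] by (intro sets.finite_UN) (auto simp: cellQ_eq_hcube cellQ'_eq_hcube borel_Times)
  have "cellQ N x \<times> UNIV \<in> sets borel"
    by (simp add: cellQ_eq_hcube borel_Times)
  then have "?Z \<in> sets borel"
    using U by blast
  moreover have "?Z \<inter> msupp (V \<mu>) = {}"
  proof (intro equalityI subsetI)
    fix q assume q: "q \<in> ?Z \<inter> msupp (V \<mu>)"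
    then have "norm (snd q) < real N"
      using norm_snd_le_msupp_V[OF \<mu> supp] slow by fastforce
    then obtain v where "v \<in> lat_v N" "snd q \<in> cellQ' N v"
      using exists_lat_v_cell[OF N] by blast
    with q show "q \<in> {}"
      by (cases q) auto
  qed auto
  ultimately have Z: "?Z \<in> null_sets (V \<mu>)"
    using emeasure_disjoint_msupp[OF sV, of ?Z] sV by (auto simp: null_sets_def)
  have UZ: "?U \<union> ?Z = cellQ N x \<times> UNIV"
    by blast
  have "(\<Sum>v\<in>lat_v N. mv N (V \<mu>) x v) = measure (V \<mu>) ?U"
    by (rule sum_mv_eq_measure_Union[OF conjunct1[OF V[OF \<mu>]] N])
  also have "\<dots> = measure (V \<mu>) (?U \<union> ?Z)"
    using U sV by (intro measure_Un_null_set[symmetric] Z) simp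
  also have "\<dots> = measure (V \<mu>) (cellQ N x \<times> UNIV)"
    by (simp only: UZ)
  also have "\<dots> = mx N \<mu> x"
    unfolding mx_def measure_def using emeasure_marginal[OF sV marg] by (simp add: cellQ_eq_hcube)
  finally show ?thesis .
qed

lemma integral_lat_step_zero:
  fixes f :: "'a \<Rightarrow> real"
  assumes \<mu>: "lattice_supported N \<rho> \<mu>" and N: "1 \<le> N" and \<rho>: "\<rho> \<le> real N"
    and slow: "C_S * (1 + \<rho>) < real N" and f: "f \<in> borel_measurable borel"
  shows "integral\<^sup>L (lat_step N s V c \<mu> 0) f = integral\<^sup>L \<mu> f"
proof -
  have "integral\<^sup>L (lat_step N s V c \<mu> 0) f = (\<Sum>(x, v)\<in>lat_x N \<times> lat_v N. mv N (V \<mu>) x v * f x)"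
    using integral_lat_step[OF N order_refl f] by simp
  also have "\<dots> = (\<Sum>x\<in>lat_x N. (\<Sum>v\<in>lat_v N. mv N (V \<mu>) x v) * f x)"
    by (simp add: sum.cartesian_product sum_distrib_right)
  also have "\<dots> = (\<Sum>x\<in>lat_x N. mx N \<mu> x * f x)"
    using sum_mv_eq_mx[OF lattice_supported_fbm[OF \<mu>] _ N slow] msupp_lattice_supported[OF \<mu>]
    by simp
  also have "\<dots> = integral\<^sup>L \<mu> f"
    by (rule integral_lattice_supported[OF \<mu> N \<rho> f, symmetric])
  finally show ?thesis .
qed

lemma lattice_supported_lat_grid:
  fixes \<mu>0 :: "'a measure"
  assumes N: "1 \<le> N" and \<mu>0: "fbm \<mu>0" and supp: "msupp \<mu>0 \<subseteq> cball 0 r0" and r0: "0 \<le> r0"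
  shows "lattice_supported N
    ((r0 + R + real DIM('a) + 1) * (1 + (C_S + real DIM('a)) / real N) ^ l - 1)
    (lat_grid N s V c \<mu>0 l)"
proof (induction l)
  case 0
  show ?case
    using lattice_supported_mono[OF lattice_supported_lat_init[OF N \<mu>0 supp], of "r0 + R + real DIM('a)"]
      nonneg by simp
next
  case (Suc l)
  let ?q = "1 + (C_S + real DIM('a)) / real N" and ?r = "r0 + R + real DIM('a) + 1"
  let ?\<rho> = "?r * ?q ^ l - 1"
  have q: "1 \<le> ?q" "1 \<le> ?q ^ l"
    using nonneg by simp_all
  have "1 \<le> ?r * ?q ^ l"
    using q(2) r0 nonneg mult_mono[OF _ q(2), of 1 ?r] by simp
  then have "0 \<le> ?\<rho>"
    by simp
  have speed_le: "speed_bound \<rho> \<le> (C_S + real DIM('a)) * (1 + \<rho>)" if "0 \<le> \<rho>" for \<rho>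
    unfolding speed_bound_def using that by (simp add: algebra_simps)
  have "?\<rho> + speed_bound ?\<rho> / real N \<le> ?\<rho> + (C_S + real DIM('a)) * (1 + ?\<rho>) / real N"
    by (intro add_left_mono divide_right_mono speed_le[OF \<open>0 \<le> ?\<rho>\<close>]) simp
  also have "\<dots> = ?r * ?q ^ Suc l - 1"
    using N by (simp add: field_simps)
  finally have step: "?\<rho> + speed_bound ?\<rho> / real N \<le> ?r * ?q ^ Suc l - 1" .
  have "R + real DIM('a) \<le> ?r * 1 - 1"
    using r0 by simp
  also have "\<dots> \<le> ?r * ?q ^ Suc l - 1"
    using r0 nonneg q(1) by (intro diff_right_mono mult_left_mono one_le_power) auto
  finally have source: "R + real DIM('a) \<le> ?r * ?q ^ Suc l - 1" .
  show ?case
    using lattice_supported_lat_step[OF Suc N] step source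
    by (auto elim!: lattice_supported_mono)
qed

lemma mass_lat_grid_le:
  assumes N: "1 \<le> N" and \<mu>0: "fbm \<mu>0"
  shows "measure (lat_grid N s V c \<mu>0 l) UNIV
    \<le> (measure \<mu>0 UNIV + s_mass0 * (real l / real N)) * exp ((L + C_b) * (real l / real N))"
proof (induction l)
  case 0
  have "measure (lat_init N \<mu>0) UNIV = (\<Sum>x\<in>lat_x N. mx N \<mu>0 x)"
    unfolding lat_init_eq_discrete_measure
    by (subst measure_discrete_measure) (auto simp: finite_lat_x[OF N] mx_def)
  also have "\<dots> \<le> measure \<mu>0 UNIV"
    by (rule sum_mx_le_mass[OF \<mu>0 N])
  finally show ?case
    by simp
next
  case (Suc l)
  have fbm: "fbm (lat_grid N s V c \<mu>0 l)"
    using N \<mu>0 by (cases l) (simp_all add: fbm_lat_init fbm_lat_step)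
  have "real (Suc l) / real N = real l / real N + 1 / real N"
    by (simp add: add_divide_distrib)
  then show ?case
    using mass_growth_step[OF _ _ s_mass0_nonneg nonneg(2,4) _ Suc.IH, of "1 / real N"]
      mass_lat_step_le[OF fbm N, of "1 / real N"]
    by simp
qed

(* Closed form of the radius recursion of lattice_supported_lat_grid up to time T. *)
definition support_radius :: "real \<Rightarrow> real \<Rightarrow> real" where
  "support_radius r0 T = (r0 + R + real DIM('a) + 1) * exp ((C_S + real DIM('a)) * T) - 1"

definition mass_bound :: "'a measure \<Rightarrow> real \<Rightarrow> real" where
  "mass_bound \<mu>0 T = (measure \<mu>0 UNIV + s_mass0 * T) * exp ((L + C_b) * T)"

definition time_lipschitz_const :: "'a measure \<Rightarrow> real \<Rightarrow> real \<Rightarrow> real" where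
  "time_lipschitz_const \<mu>0 r0 T = s_mass0 + L * mass_bound \<mu>0 T
     + mass_bound \<mu>0 T * (C_b * exp C_b + exp C_b * speed_bound (support_radius r0 T))"

definition estimate_const :: "'a measure \<Rightarrow> real \<Rightarrow> real \<Rightarrow> real" where
  "estimate_const \<mu>0 r0 T = max (time_lipschitz_const \<mu>0 r0 T)
     (mass_bound \<mu>0 T * (1 + speed_bound (support_radius r0 T) + (speed_bound (support_radius r0 T))\<^sup>2))"

end

section \<open>Bounds up to time T\<close>

(* N_large keeps all atoms inside the lattice box and all charged velocities inside the
   velocity lattice up to time T, so that no mass is lost (integral_lat_step_zero). *)
locale lattice_run = lattice_scheme V s c C_S L R C_b
  for V :: "'a::euclidean_space measure \<Rightarrow> ('a \<times> 'a) measure" and s c C_S L R C_b +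
  fixes \<mu>0 :: "'a measure" and T r0 :: real and N :: nat
  assumes T: "0 \<le> T" and \<mu>0: "fbm \<mu>0" and supp: "msupp \<mu>0 \<subseteq> cball 0 r0" and r0: "0 \<le> r0"
    and N: "1 \<le> N"
    and N_large: "support_radius r0 T + C_S * (1 + support_radius r0 T) < real N"
begin

abbreviation grid :: "nat \<Rightarrow> 'a measure" where
  "grid \<equiv> lat_grid N s V c \<mu>0"

abbreviation sol :: "real \<Rightarrow> 'a measure" where
  "sol \<equiv> lat_sol N s V c \<mu>0"

lemma support_radius_nonneg: "0 \<le> support_radius r0 T"
proof -
  have "1 * 1 \<le> (r0 + R + real DIM('a) + 1) * exp ((C_S + real DIM('a)) * T)"
    using r0 nonneg T by (intro mult_mono) auto
  then show ?thesis
    unfolding support_radius_def by simp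
qed

lemma support_radius_le: "support_radius r0 T \<le> real N" "C_S * (1 + support_radius r0 T) < real N"
proof -
  have "0 \<le> C_S * (1 + support_radius r0 T)"
    using nonneg support_radius_nonneg by simp
  then show "support_radius r0 T \<le> real N" "C_S * (1 + support_radius r0 T) < real N"
    using N_large support_radius_nonneg by linarith+
qed

lemma grid_radius_le:
  assumes l: "real l / real N \<le> T"
  shows "(r0 + R + real DIM('a) + 1) * (1 + (C_S + real DIM('a)) / real N) ^ l - 1 \<le> support_radius r0 T"
proof -
  have "(1 + (C_S + real DIM('a)) / real N) ^ l \<le> exp ((C_S + real DIM('a)) / real N) ^ l"
    using nonneg by (intro power_mono exp_ge_add_one_self) auto
  also have "\<dots> = exp ((C_S + real DIM('a)) * (real l / real N))"
    by (simp flip: exp_of_nat_mult)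
  also have "\<dots> \<le> exp ((C_S + real DIM('a)) * T)"
    using mult_left_mono[OF l, of "C_S + real DIM('a)"] nonneg by simp
  finally show ?thesis
    unfolding support_radius_def using r0 nonneg by (simp add: mult_left_mono)
qed

lemma lattice_supported_grid:
  "real l / real N \<le> T \<Longrightarrow> lattice_supported N (support_radius r0 T) (grid l)"
  using lattice_supported_lat_grid[OF N \<mu>0 supp r0] grid_radius_le by (blast intro: lattice_supported_mono)

lemma mass_bound_mono:
  assumes "0 \<le> a" "a \<le> T"
  shows "(measure \<mu>0 UNIV + s_mass0 * a) * exp ((L + C_b) * a) \<le> mass_bound \<mu>0 T"
proof -
  have "(L + C_b) * a \<le> (L + C_b) * T"
    using assms nonneg by (intro mult_left_mono) auto
  then show ?thesis
    unfolding mass_bound_def using assms s_mass0_nonneg T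
    by (intro mult_mono add_left_mono mult_left_mono) auto
qed

lemma mass_bound_nonneg: "0 \<le> mass_bound \<mu>0 T"
  unfolding mass_bound_def using s_mass0_nonneg T by (intro mult_nonneg_nonneg add_nonneg_nonneg) auto

lemma mass_grid_le: "real l / real N \<le> T \<Longrightarrow> measure (grid l) UNIV \<le> mass_bound \<mu>0 T"
  using mass_lat_grid_le[OF N \<mu>0, of l] mass_bound_mono[of "real l / real N"] by simp

lemma sol_eq_lat_step:
  assumes "real l / real N < t" "t \<le> (real l + 1) / real N"
  shows "sol t = lat_step N s V c (grid l) (t - real l / real N)"
proof -
  have "real l < t * real N" "t * real N \<le> real l + 1"
    using assms N by (simp_all add: divide_less_eq le_divide_eq)
  then have "nat (\<lceil>t * real N\<rceil> - 1) = l"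
    by linarith
  moreover have "0 \<le> real l / real N"
    by simp
  then have "0 < t"
    using assms(1) by linarith
  ultimately show ?thesis
    unfolding lat_sol_def Let_def by simp
qed

lemma sol_grid: "sol (real l / real N) = grid l"
proof (cases l)
  case 0
  then show ?thesis
    unfolding lat_sol_def by simp
next
  case (Suc k)
  have "sol (real l / real N) = lat_step N s V c (grid k) (real l / real N - real k / real N)"
    using N Suc by (intro sol_eq_lat_step) (simp_all add: divide_strict_right_mono add.commute)
  also have "real l / real N - real k / real N = 1 / real N"
    using Suc by (simp add: diff_divide_distrib[symmetric])
  finally show ?thesis
    using Suc by simp
qed

lemma exists_piece:
  assumes "0 < t"
  obtains l where "real l / real N < t" "t \<le> (real l + 1) / real N"
proof
  define l where "l = nat (\<lceil>t * real N\<rceil> - 1)"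
  have "0 < t * real N"
    using assms N by simp
  then have "real l < t * real N" "t * real N \<le> real l + 1"
    unfolding l_def by linarith+
  then show "real l / real N < t" "t \<le> (real l + 1) / real N"
    using N by (simp_all add: divide_less_eq le_divide_eq)
qed

lemma integral_sol_piece:
  fixes f :: "'a \<Rightarrow> real"
  assumes l: "real l / real N \<le> T" and t: "real l / real N \<le> t" "t \<le> (real l + 1) / real N"
    and f: "f \<in> borel_measurable borel"
  shows "integral\<^sup>L (sol t) f = integral\<^sup>L (lat_step N s V c (grid l) (t - real l / real N)) f"
proof (cases "t = real l / real N")
  case True
  then show ?thesis
    using integral_lat_step_zero[OF lattice_supported_grid[OF l] N support_radius_le f] sol_grid
    by simp
next
  case False
  then have "real l / real N < t"
    using t by simp
  then show ?thesis
    using sol_eq_lat_step[OF _ t(2)] by simp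
qed

lemma mass_sol_le:
  assumes t: "t \<in> {0..T}"
  shows "measure (sol t) UNIV \<le> mass_bound \<mu>0 T"
proof (cases "t = 0")
  case True
  then show ?thesis
    using mass_grid_le[of 0] sol_grid[of 0] T by simp
next
  case False
  with t have "0 < t"
    by simp
  then obtain l where l: "real l / real N < t" "t \<le> (real l + 1) / real N"
    by (rule exists_piece)
  let ?a = "real l / real N" and ?m = "measure (grid l) UNIV"
  have "?a \<le> T"
    using l t by simp
  then have fbm: "fbm (grid l)"
    by (rule lattice_supported_fbm[OF lattice_supported_grid])
  have "0 \<le> t - ?a" "0 \<le> ?a"
    using l by simp_all
  have "measure (sol t) UNIV \<le> (t - ?a) * (s_mass0 + L * ?m) + exp (C_b * (t - ?a)) * ?m"
    unfolding sol_eq_lat_step[OF l] by (rule mass_lat_step_le[OF fbm N \<open>0 \<le> t - ?a\<close>])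
  also have "\<dots> \<le> (measure \<mu>0 UNIV + s_mass0 * (?a + (t - ?a))) * exp ((L + C_b) * (?a + (t - ?a)))"
    by (rule mass_growth_step[OF \<open>0 \<le> t - ?a\<close> measure_nonneg s_mass0_nonneg nonneg(2,4)
          \<open>0 \<le> ?a\<close> mass_lat_grid_le[OF N \<mu>0]])
  also have "\<dots> \<le> mass_bound \<mu>0 T"
    using t mass_bound_mono[of t] by simp
  finally show ?thesis .
qed

lemma time_lipschitz_const_nonneg: "0 \<le> time_lipschitz_const \<mu>0 r0 T"
  unfolding time_lipschitz_const_def
  using s_mass0_nonneg nonneg mass_bound_nonneg speed_bound_nonneg[OF support_radius_nonneg]
  by simp

lemma integral_sol_piece_lipschitz:
  assumes \<psi>: "\<psi> \<in> BL1" and l: "real l / real N \<le> T"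
    and t: "real l / real N \<le> t" "t \<le> (real l + 1) / real N"
    and u: "real l / real N \<le> u" "u \<le> (real l + 1) / real N"
  shows "\<bar>integral\<^sup>L (sol t) \<psi> - integral\<^sup>L (sol u) \<psi>\<bar> \<le> time_lipschitz_const \<mu>0 r0 T * \<bar>t - u\<bar>"
proof -
  let ?a = "real l / real N" and ?m = "measure (grid l) UNIV"
  let ?X = "C_b * exp C_b + exp C_b * speed_bound (support_radius r0 T)"
  have "(real l + 1) / real N - ?a = 1 / real N" "1 / real N \<le> 1"
    using N by (simp_all add: diff_divide_distrib[symmetric])
  then have \<tau>: "t - ?a \<in> {0..1}" "u - ?a \<in> {0..1}"
    using t u by auto
  have "\<bar>integral\<^sup>L (sol t) \<psi> - integral\<^sup>L (sol u) \<psi>\<bar>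
      = \<bar>integral\<^sup>L (lat_step N s V c (grid l) (t - ?a)) \<psi> - integral\<^sup>L (lat_step N s V c (grid l) (u - ?a)) \<psi>\<bar>"
    using integral_sol_piece[OF l t BL1_borel_measurable[OF \<psi>]]
      integral_sol_piece[OF l u BL1_borel_measurable[OF \<psi>]] by simp
  also have "\<dots> \<le> \<bar>t - u\<bar> * (s_mass0 + L * ?m + ?m * ?X)"
    using lat_step_time_lipschitz[OF lattice_supported_grid[OF l] N support_radius_nonneg \<psi> \<tau>]
    by simp
  also have "\<dots> \<le> \<bar>t - u\<bar> * time_lipschitz_const \<mu>0 r0 T"
    unfolding time_lipschitz_const_def
    using mass_grid_le[OF l] nonneg speed_bound_nonneg[OF support_radius_nonneg]
    by (intro mult_left_mono add_mono mult_left_mono mult_right_mono) auto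
  finally show ?thesis
    by (simp add: mult.commute)
qed

lemma sol_time_lipschitz:
  assumes \<psi>: "\<psi> \<in> BL1"
  shows "(time_lipschitz_const \<mu>0 r0 T)-lipschitz_on {0..T} (\<lambda>t. integral\<^sup>L (sol t) \<psi>)"
proof (rule lipschitz_on_uniform_pieces[OF _ time_lipschitz_const_nonneg])
  show "0 < 1 / real N"
    using N by simp
  fix l :: nat assume "real l * (1 / real N) \<le> T"
  then have l: "real l / real N \<le> T"
    by simp
  show "(time_lipschitz_const \<mu>0 r0 T)-lipschitz_on
      {real l * (1 / real N) .. min (real (Suc l) * (1 / real N)) T} (\<lambda>t. integral\<^sup>L (sol t) \<psi>)"
  proof (rule lipschitz_onI[OF _ time_lipschitz_const_nonneg])
    fix t u assume "t \<in> {real l * (1 / real N) .. min (real (Suc l) * (1 / real N)) T}"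
      "u \<in> {real l * (1 / real N) .. min (real (Suc l) * (1 / real N)) T}"
    then have "real l / real N \<le> t" "t \<le> (real l + 1) / real N"
      "real l / real N \<le> u" "u \<le> (real l + 1) / real N"
      by (auto simp: add_divide_distrib)
    then show "dist (integral\<^sup>L (sol t) \<psi>) (integral\<^sup>L (sol u) \<psi>) \<le> time_lipschitz_const \<mu>0 r0 T * dist t u"
      using integral_sol_piece_lipschitz[OF \<psi> l] by (simp add: dist_real_def)
  qed
qed

lemma bl_dist_sol_le:
  assumes "t \<in> {0..T}" "u \<in> {0..T}"
  shows "bl_dist (sol t) (sol u) \<le> time_lipschitz_const \<mu>0 r0 T * \<bar>t - u\<bar>"
proof (rule bl_dist_leI)
  fix \<psi> :: "'a \<Rightarrow> real" assume "\<psi> \<in> BL1"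
  then have "\<bar>integral\<^sup>L (sol t) \<psi> - integral\<^sup>L (sol u) \<psi>\<bar> \<le> time_lipschitz_const \<mu>0 r0 T * \<bar>t - u\<bar>"
    using lipschitz_onD[OF sol_time_lipschitz assms] by (simp add: dist_real_def)
  then show "integral\<^sup>L (sol t) \<psi> - integral\<^sup>L (sol u) \<psi> \<le> time_lipschitz_const \<mu>0 r0 T * \<bar>t - u\<bar>"
    by (rule abs_le_D1)
qed

lemma lattice_estimates:
  "(\<forall>t\<in>{0..T}. \<forall>u\<in>{0..T}. bl_dist (sol t) (sol u) \<le> estimate_const \<mu>0 r0 T * \<bar>t - u\<bar>)
   \<and> (\<forall>t\<in>{0..T}. bl_norm (V (sol t)) = bl_norm (sol t) \<and> bl_norm (sol t) \<le> estimate_const \<mu>0 r0 T)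
   \<and> (\<forall>l::nat. real l / real N \<le> T \<longrightarrow>
        (\<Sum>(x, v)\<in>lat_x N \<times> lat_v N. mv N (V (grid l)) x v * (1 + norm v + (norm v)\<^sup>2))
          \<le> estimate_const \<mu>0 r0 T)"
proof (intro conjI ballI allI impI)
  let ?M = "mass_bound \<mu>0 T" and ?B = "speed_bound (support_radius r0 T)"
  have B: "0 \<le> ?B"
    by (rule speed_bound_nonneg[OF support_radius_nonneg])
  have M: "?M \<le> ?M * (1 + ?B + ?B\<^sup>2)"
    using mult_left_mono[OF _ mass_bound_nonneg, of 1 "1 + ?B + ?B\<^sup>2"] B by simp
  fix t assume t: "t \<in> {0..T}"
  have fbm: "fbm (sol t)"
    unfolding lat_sol_def Let_def using N by (simp add: fbm_lat_init fbm_lat_step)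
  show "bl_norm (V (sol t)) = bl_norm (sol t)"
    using bl_norm_fbm[OF fbm] bl_norm_fbm[OF conjunct1[OF V[OF fbm]]] mass_V[OF fbm] by simp
  show "bl_norm (sol t) \<le> estimate_const \<mu>0 r0 T"
    unfolding estimate_const_def bl_norm_fbm[OF fbm] using mass_sol_le[OF t] M by linarith
  fix u assume u: "u \<in> {0..T}"
  have "0 \<le> \<bar>t - u\<bar>"
    by simp
  then show "bl_dist (sol t) (sol u) \<le> estimate_const \<mu>0 r0 T * \<bar>t - u\<bar>"
    using bl_dist_sol_le[OF t u] mult_right_mono[OF max.cobounded1]
    unfolding estimate_const_def by (blast intro: order_trans)
next
  let ?M = "mass_bound \<mu>0 T" and ?B = "speed_bound (support_radius r0 T)"
  fix l :: nat assume l: "real l / real N \<le> T"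
  have "(\<Sum>(x, v)\<in>lat_x N \<times> lat_v N. mv N (V (grid l)) x v * (1 + norm v + (norm v)\<^sup>2))
      \<le> measure (grid l) UNIV * (1 + ?B + ?B\<^sup>2)"
    by (rule sum_mv_moment_le[OF lattice_supported_grid[OF l] N support_radius_nonneg])
  also have "\<dots> \<le> ?M * (1 + ?B + ?B\<^sup>2)"
    using mass_grid_le[OF l] speed_bound_nonneg[OF support_radius_nonneg] by (intro mult_right_mono) auto
  finally show "(\<Sum>(x, v)\<in>lat_x N \<times> lat_v N. mv N (V (grid l)) x v * (1 + norm v + (norm v)\<^sup>2))
      \<le> estimate_const \<mu>0 r0 T"
    unfolding estimate_const_def by linarith
qed

end

lemma lattice_scheme_abs_constants:
  fixes V :: "'a::euclidean_space measure \<Rightarrow> ('a \<times> 'a) measure"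
  assumes V: "\<And>\<mu>. fbm \<mu> \<Longrightarrow> fbm (V \<mu>) \<and> distr (V \<mu>) borel fst = \<mu>"
    and V1: "\<And>\<mu> r. fbm \<mu> \<Longrightarrow> (\<forall>p\<in>msupp (V \<mu>). norm (fst p) \<le> r) \<Longrightarrow>
                 (\<forall>p\<in>msupp (V \<mu>). norm (snd p) \<le> C_S * (1 + r))"
    and S: "\<And>\<mu>. fbm \<mu> \<Longrightarrow> fbm (s \<mu>)"
    and S1: "\<And>\<mu> \<nu>. fbm \<mu> \<Longrightarrow> fbm \<nu> \<Longrightarrow> bl_dist (s \<mu>) (s \<nu>) \<le> L * bl_dist \<mu> \<nu>"
    and S2: "\<And>\<mu>. fbm \<mu> \<Longrightarrow> msupp (s \<mu>) \<subseteq> ball 0 R"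
    and C1: "\<And>x \<mu>. fbm \<mu> \<Longrightarrow> \<bar>c x \<mu>\<bar> \<le> C_b"
  shows "lattice_scheme V s c (\<bar>C_S\<bar>) (max L 0) (\<bar>R\<bar>) (max C_b 0)"
proof (unfold_locales; (elim V S)?)
  fix \<mu> r assume \<mu>: "fbm \<mu>" and r: "\<forall>p\<in>msupp (V \<mu>). norm (fst p) \<le> r"
  show "\<forall>p\<in>msupp (V \<mu>). norm (snd p) \<le> \<bar>C_S\<bar> * (1 + r)"
  proof
    fix p assume p: "p \<in> msupp (V \<mu>)"
    then have "norm (fst p) \<le> r"
      using r by blast
    then have "0 \<le> 1 + r"
      using norm_ge_zero[of "fst p"] by linarith
    then have "C_S * (1 + r) \<le> \<bar>C_S\<bar> * (1 + r)"
      by (intro mult_right_mono) auto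
    then show "norm (snd p) \<le> \<bar>C_S\<bar> * (1 + r)"
      using V1[OF \<mu> r] p by fastforce
  qed
next
  fix \<mu> \<nu> :: "'a measure" assume "fbm \<mu>" "fbm \<nu>"
  then show "bl_dist (s \<mu>) (s \<nu>) \<le> max L 0 * bl_dist \<mu> \<nu>"
    using S1 mult_right_mono[OF max.cobounded1 bl_dist_nonneg, of \<mu> \<nu> L 0] by fastforce
next
  fix \<mu> :: "'a measure" assume "fbm \<mu>"
  then show "msupp (s \<mu>) \<subseteq> ball 0 \<bar>R\<bar>"
    using S2 subset_ball[OF abs_ge_self, of 0 R] by blast
next
  fix x and \<mu> :: "'a measure" assume "fbm \<mu>"
  then show "\<bar>c x \<mu>\<bar> \<le> max C_b 0"
    using C1 by (simp add: le_max_iff_disj)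
qed simp_all

theorem lemma4p6:
  fixes V :: "'a::euclidean_space measure \<Rightarrow> ('a \<times> 'a) measure"
    and s :: "'a measure \<Rightarrow> 'a measure"
    and c :: "'a \<Rightarrow> 'a measure \<Rightarrow> real"
    and \<mu>0 :: "'a measure"
    and T C_S L R C_b C_L :: real
    and C_F :: "real \<Rightarrow> real"
  assumes T: "T > 0"
    and mu0: "fbm \<mu>0" "bounded (msupp \<mu>0)"
    and V: "\<And>\<mu>. fbm \<mu> \<Longrightarrow> fbm (V \<mu>) \<and> distr (V \<mu>) borel fst = \<mu>"
    and V1: "\<And>\<mu> r. fbm \<mu> \<Longrightarrow> (\<forall>p\<in>msupp (V \<mu>). norm (fst p) \<le> r) \<Longrightarrow>
                 (\<forall>p\<in>msupp (V \<mu>). norm (snd p) \<le> C_S * (1 + r))"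
    and V2: "\<And>R' \<mu> \<nu>. R' > 0 \<Longrightarrow> fbm \<mu> \<Longrightarrow> fbm \<nu> \<Longrightarrow> msupp \<mu> \<subseteq> ball 0 R' \<Longrightarrow>
                 msupp \<nu> \<subseteq> ball 0 R' \<Longrightarrow> bl_dist (V \<mu>) (V \<nu>) \<le> C_F R' * bl_dist \<mu> \<nu>"
    and S: "\<And>\<mu>. fbm \<mu> \<Longrightarrow> fbm (s \<mu>)"
    and S1: "\<And>\<mu> \<nu>. fbm \<mu> \<Longrightarrow> fbm \<nu> \<Longrightarrow> bl_dist (s \<mu>) (s \<nu>) \<le> L * bl_dist \<mu> \<nu>"
    and S2: "\<And>\<mu>. fbm \<mu> \<Longrightarrow> msupp (s \<mu>) \<subseteq> ball 0 R"
    and C1: "\<And>x \<mu>. fbm \<mu> \<Longrightarrow> \<bar>c x \<mu>\<bar> \<le> C_b"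
    and C2: "\<And>x y \<mu> \<nu>. fbm \<mu> \<Longrightarrow> fbm \<nu> \<Longrightarrow>
                 \<bar>c x \<mu> - c y \<nu>\<bar> \<le> C_L * (norm (x - y) + bl_dist \<mu> \<nu>)"
  shows "\<exists>C_d. \<exists>N0::nat. \<forall>N\<ge>N0. N \<ge> 1 \<longrightarrow>
     (\<forall>t\<in>{0..T}. \<forall>u\<in>{0..T}.
        bl_dist (lat_sol N s V c \<mu>0 t) (lat_sol N s V c \<mu>0 u) \<le> C_d * \<bar>t - u\<bar>)
   \<and> (\<forall>t\<in>{0..T}.
        bl_norm (V (lat_sol N s V c \<mu>0 t)) = bl_norm (lat_sol N s V c \<mu>0 t)
      \<and> bl_norm (lat_sol N s V c \<mu>0 t) \<le> C_d)
   \<and> (\<forall>l::nat. real l / real N \<le> T \<longrightarrow>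
        (\<Sum>(x,v)\<in>lat_x N \<times> lat_v N.
           mv N (V (lat_grid N s V c \<mu>0 l)) x v * (1 + norm v + (norm v)^2)) \<le> C_d)"
proof -
  have scheme: "lattice_scheme V s c (\<bar>C_S\<bar>) (max L 0) (\<bar>R\<bar>) (max C_b 0)"
    by (rule lattice_scheme_abs_constants[OF V V1 S S1 S2 C1])
  interpret lattice_scheme V s c "\<bar>C_S\<bar>" "max L 0" "\<bar>R\<bar>" "max C_b 0"
    by (rule scheme)
  obtain r0 where "0 < r0" "\<forall>x\<in>msupp \<mu>0. norm x \<le> r0"
    using mu0(2) unfolding bounded_pos by blast
  then have r0: "0 \<le> r0" "msupp \<mu>0 \<subseteq> cball 0 r0"
    by auto
  define N0 where "N0 = nat \<lceil>support_radius r0 T + \<bar>C_S\<bar> * (1 + support_radius r0 T)\<rceil> + 1"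
  have run: "lattice_run V s c (\<bar>C_S\<bar>) (max L 0) (\<bar>R\<bar>) (max C_b 0) \<mu>0 T r0 N"
    if "N0 \<le> N" "1 \<le> N" for N
    using that T mu0(1) r0 unfolding N0_def
    by (intro lattice_run.intro[OF scheme] lattice_run_axioms.intro) linarith+
  show ?thesis
    by (intro exI[of _ "estimate_const \<mu>0 r0 T"] exI[of _ N0] allI impI)
      (rule lattice_run.lattice_estimates[OF run]; assumption)
qed

end
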